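(* Let $N$ be a finite set, $r\notin N$, $V=N\cup\{r\}$, and let $G=(V,E)$ be the complete graph on $V$ with edge weights $w:E\to\mathbb{R}$ taking the distinct values $w_1<\dots<w_k$. Assume that for every $i<k$ there is no violated cycle in $G_i$, and that $f_{xy}(\hat N(xy))\ge 0$ for every candidate edge $xy$. Let $uv$ be a candidate edge and $S\in\mathcal{S}_{uv}$ with $S\subseteq\hat N(uv)$. Then for every $s\in S\setminus\{r\}$, $f_{uv}(S)\le f_{uv}(S\setminus\{s\})$.
   Context: For $S\subseteq V$, $\mathrm{mst}(S)$ is the weight of a minimum spanning tree of $G[S]$. For distinct $u,v\in N$, $\mathcal{S}_{uv}=\{S\subseteq V: r\in S,\ u,v\notin S\}$ and $f_{uv}(S)=\mathrm{mst}(S\cup\{u\})+\mathrm{mst}(S\cup\{v\})-\mathrm{mst}(S)-\mathrm{mst}(S\cup\{u,v\})$. $\hat N(uv)$ is the set of vertices $s\in V\setminus\{u,v\}$ with $\max\{w(su),w(sv)\}>w(uv)$. An edge $uv$ is a candidate edge if $r\in\hat N(uv)$ (so $u,v\in N$). $E_i=\{e\in E:w(e)\le w_i\}$, $G_i=(V,E_i)$. For a cycle $C$ in $G_i$ and a chord $f=xy$ of $C$ in $G_i$, with $P_1,P_2$ the two $x$-$y$ paths of $C$, $f$ covers $C$ if $w(f)\ge w(e)$ for all $e\in E(P_1)$ or for all $e\in E(P_2)$; $C$ is well-covered if covered by all its chords. A violated cycle in $G_i$ is a well-covered cycle of $G_i$ containing two vertices non-adjacent in $G_i$ and a vertex $x\ne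 r$ with $rx\notin E_i$. *)

theory Defs
  imports Complex_Main
begin

text \<open>Complete graph on a vertex set V; edges are two-element sets;
  edge weights are given by w :: 'a set \<Rightarrow> real (only its values on edges matter).\<close>

definition cedges :: "'a set \<Rightarrow> 'a set set" where
  "cedges S = {{x, y} | x y. x \<in> S \<and> y \<in> S \<and> x \<noteq> y}"

definition is_spanning_tree :: "'a set \<Rightarrow> 'a set set \<Rightarrow> bool" where
  "is_spanning_tree S T \<longleftrightarrow>
     T \<subseteq> cedges S \<and> card T = card S - 1 \<and>
     (\<forall>x\<in>S. \<forall>y\<in>S. (x, y) \<in> {(a, b). {a, b} \<in> T}\<^sup>*)"

definition mst :: "('a set \<Rightarrow> real) \<Rightarrow> 'a set \<Rightarrow> real" where
  "mst w S = Min ((\<lambda>T. \<Sum>e\<in>T. w e) ` {T. is_spanning_tree S T})"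

definition f_uv :: "('a set \<Rightarrow> real) \<Rightarrow> 'a \<Rightarrow> 'a \<Rightarrow> 'a set \<Rightarrow> real" where
  "f_uv w u v S = mst w (insert u S) + mst w (insert v S) - mst w S - mst w (insert u (insert v S))"

definition Nhat :: "'a set \<Rightarrow> ('a set \<Rightarrow> real) \<Rightarrow> 'a \<Rightarrow> 'a \<Rightarrow> 'a set" where
  "Nhat V w u v = {s \<in> V - {u, v}. max (w {s, u}) (w {s, v}) > w {u, v}}"

definition candidate_edge :: "'a set \<Rightarrow> 'a \<Rightarrow> ('a set \<Rightarrow> real) \<Rightarrow> 'a \<Rightarrow> 'a \<Rightarrow> bool" where
  "candidate_edge N r w u v \<longleftrightarrow> u \<in> N \<and> v \<in> N \<and> u \<noteq> v \<and> r \<in> Nhat (insert r N) w u v"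

definition in_Gt :: "'a set \<Rightarrow> ('a set \<Rightarrow> real) \<Rightarrow> real \<Rightarrow> 'a set \<Rightarrow> bool" where
  "in_Gt V w t e \<longleftrightarrow> e \<in> cedges V \<and> w e \<le> t"

definition cyc_edge :: "'a list \<Rightarrow> nat \<Rightarrow> 'a set" where
  "cyc_edge cs j = {cs ! j, cs ! ((j + 1) mod length cs)}"

definition is_cycle_Gt :: "'a set \<Rightarrow> ('a set \<Rightarrow> real) \<Rightarrow> real \<Rightarrow> 'a list \<Rightarrow> bool" where
  "is_cycle_Gt V w t cs \<longleftrightarrow> distinct cs \<and> length cs \<ge> 3 \<and>
     (\<forall>j < length cs. in_Gt V w t (cyc_edge cs j))"

text \<open>The two paths between c_a and c_b are
  formed by cycle edges with index in [a,b) and the remaining ones.\<close>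
definition is_chord_Gt :: "'a set \<Rightarrow> ('a set \<Rightarrow> real) \<Rightarrow> real \<Rightarrow> 'a list \<Rightarrow> nat \<Rightarrow> nat \<Rightarrow> bool" where
  "is_chord_Gt V w t cs a b \<longleftrightarrow> a < b \<and> b < length cs \<and>
     in_Gt V w t {cs ! a, cs ! b} \<and> {cs ! a, cs ! b} \<notin> cyc_edge cs ` {..<length cs}"

definition covers :: "('a set \<Rightarrow> real) \<Rightarrow> 'a list \<Rightarrow> nat \<Rightarrow> nat \<Rightarrow> bool" where
  "covers w cs a b \<longleftrightarrow>
     (\<forall>j. a \<le> j \<and> j < b \<longrightarrow> w {cs ! a, cs ! b} \<ge> w (cyc_edge cs j)) \<or>
     (\<forall>j. j < length cs \<and> \<not> (a \<le> j \<and> j < b) \<longrightarrow> w {cs ! a, cs ! b} \<ge> w (cyc_edge cs j))"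

definition well_covered_Gt :: "'a set \<Rightarrow> ('a set \<Rightarrow> real) \<Rightarrow> real \<Rightarrow> 'a list \<Rightarrow> bool" where
  "well_covered_Gt V w t cs \<longleftrightarrow> is_cycle_Gt V w t cs \<and>
     (\<forall>a b. is_chord_Gt V w t cs a b \<longrightarrow> covers w cs a b)"

definition violated_cycle_Gt :: "'a set \<Rightarrow> 'a \<Rightarrow> ('a set \<Rightarrow> real) \<Rightarrow> real \<Rightarrow> 'a list \<Rightarrow> bool" where
  "violated_cycle_Gt V r w t cs \<longleftrightarrow> well_covered_Gt V w t cs \<and>
     (\<exists>y\<in>set cs. \<exists>z\<in>set cs. y \<noteq> z \<and> \<not> in_Gt V w t {y, z}) \<and>
     (\<exists>x\<in>set cs. x \<noteq> r \<and> \<not> in_Gt V w t {r, x})"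

end

theory Submission
  imports Defs
begin

(* Write kappa_t(X) for the number of components of G_t[X]. Kruskal's algorithm gives
     mst(X) = w_1 (|X| - 1) + sum_{i<k} (w_{i+1} - w_i) (kappa_{w_i}(X) - 1),
   so f_uv(S) = sum_{i<k} (w_{i+1} - w_i) f_{w_i}(S), where f_t is f_uv with mst replaced by kappa_t.
   Counting components, f_t(S) = [uv in G_t, or some component of G_t[S] is adjacent to u and v]
   minus the number of such components.

   We show f_uv(S + s) <= f_uv(S) for s in N^(uv) - S by induction on the number of edges heavier
   than uv. Some endpoint x of uv has w(sx) > w(uv); let x' be the other one.
   If S is contained in N^(sx), then sx is a candidate edge with fewer heavier edges, and the
   induction hypothesis, applied one vertex at a time from N^(sx) down to S, gives
   f_sx(S) >= f_sx(N^(sx)), which is >= 0 by hypothesis. Since x' is joined to s and x by edges no heavier than sx,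
   every f_t(S + x') for the pair sx is <= 0, hence f_sx(S + x') <= 0, and we conclude with the
   identity f_uv(S + s) - f_uv(S) = f_sx(S + x') - f_sx(S).
   Otherwise some y in S satisfies w(ys), w(yx) <= w(sx), and we compare level by level:
   f_t(S + s) > f_t(S) would need two components of G_t[S] adjacent to u, v and s. Induced
   walks from s to x through these components (or through y, if sx is an edge of G_t) close up
   into a violated cycle of G_t. *)

section \<open>Connected components of a relation\<close>

definition component :: "('a \<times> 'a) set \<Rightarrow> 'a \<Rightarrow> 'a set" where
  "component R a = {b. (a, b) \<in> R\<^sup>*}"

definition components :: "('a \<times> 'a) set \<Rightarrow> 'a set \<Rightarrow> 'a set set" where
  "components R X = component R ` X"

lemma rtrancl_Un_clique:
  "(R \<union> Y \<times> Y)\<^sup>* = R\<^sup>* \<union> {(p, q). (\<exists>y\<in>Y. (p, y) \<in> R\<^sup>*) \<and> (\<exists>y\<in>Y. (y, q) \<in> R\<^sup>*)}"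
proof
  show "(R \<union> Y \<times> Y)\<^sup>* \<subseteq> R\<^sup>* \<union> {(p, q). (\<exists>y\<in>Y. (p, y) \<in> R\<^sup>*) \<and> (\<exists>y\<in>Y. (y, q) \<in> R\<^sup>*)}"
  proof (rule subrelI)
    fix p q assume "(p, q) \<in> (R \<union> Y \<times> Y)\<^sup>*"
    then show "(p, q) \<in> R\<^sup>* \<union> {(p, q). (\<exists>y\<in>Y. (p, y) \<in> R\<^sup>*) \<and> (\<exists>y\<in>Y. (y, q) \<in> R\<^sup>*)}"
      by (induction rule: rtrancl_induct) (auto intro: rtrancl_into_rtrancl)
  qed
  have sub: "R\<^sup>* \<subseteq> (R \<union> Y \<times> Y)\<^sup>*"
    by (rule rtrancl_mono) auto
  have "(p, q) \<in> (R \<union> Y \<times> Y)\<^sup>*" if "y \<in> Y" "(p, y) \<in> R\<^sup>*" "y' \<in> Y" "(y', q) \<in> R\<^sup>*" for p q y y'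
    using that sub by (meson UnI2 SigmaI r_into_rtrancl rtrancl_trans subsetD)
  then show "R\<^sup>* \<union> {(p, q). (\<exists>y\<in>Y. (p, y) \<in> R\<^sup>*) \<and> (\<exists>y\<in>Y. (y, q) \<in> R\<^sup>*)} \<subseteq> (R \<union> Y \<times> Y)\<^sup>*"
    using sub by blast
qed

lemma rtrancl_eqI: "A \<subseteq> B\<^sup>* \<Longrightarrow> B \<subseteq> A\<^sup>* \<Longrightarrow> A\<^sup>* = B\<^sup>*"
  by (rule subset_antisym; rule rtrancl_subset_rtrancl)

lemma component_refl: "a \<in> component R a"
  by (simp add: component_def)

lemma component_subset: "R \<subseteq> X \<times> X \<Longrightarrow> a \<in> X \<Longrightarrow> component R a \<subseteq> X"
  unfolding component_def by (auto elim: rtrancl_induct)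

lemma component_isolated: "R \<subseteq> X \<times> X \<Longrightarrow> x \<notin> X \<Longrightarrow> component R x = {x}"
  unfolding component_def by (auto elim: converse_rtranclE)

lemma component_eq_iff:
  assumes "sym R"
  shows "component R a = component R b \<longleftrightarrow> (a, b) \<in> R\<^sup>*"
proof
  assume "component R a = component R b"
  then show "(a, b) \<in> R\<^sup>*"
    using component_refl[of b R] unfolding component_def by blast
next
  assume ab: "(a, b) \<in> R\<^sup>*"
  moreover have "(b, a) \<in> R\<^sup>*"
    using ab assms by (meson sym_rtrancl symD)
  ultimately show "component R a = component R b"
    unfolding component_def by (auto intro: rtrancl_trans)
qed

lemma component_eq: "sym R \<Longrightarrow> b \<in> component R a \<Longrightarrow> component R b = component R a"
  by (metis component_def component_eq_iff mem_Collect_eq)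

lemma component_of_member: "sym R \<Longrightarrow> C \<in> components R X \<Longrightarrow> p \<in> C \<Longrightarrow> C = component R p"
  unfolding components_def using component_eq by fastforce

lemma components_cong: "R\<^sup>* = R'\<^sup>* \<Longrightarrow> components R X = components R' X"
  by (simp add: components_def component_def)

lemma finite_components: "finite X \<Longrightarrow> finite (components R X)"
  by (simp add: components_def)

lemma component_Un_clique:
  assumes "sym R"
  shows "component (R \<union> Y \<times> Y) a =
           (if component R a \<inter> Y = {} then component R a else {q. \<exists>y\<in>Y. (y, q) \<in> R\<^sup>*})"
proof (cases "component R a \<inter> Y = {}")
  case True
  then show ?thesis unfolding component_def rtrancl_Un_clique by auto
next
  case False
  then obtain y where "y \<in> Y" "(a, y) \<in> R\<^sup>*" "(y, a) \<in> R\<^sup>*"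
    using assms by (auto simp: component_def intro: sym_rtrancl[THEN symD])
  then show ?thesis using False unfolding component_def rtrancl_Un_clique by (auto intro: rtrancl_trans)
qed

lemma components_Un_clique:
  assumes "sym R" and "Y \<subseteq> X" and "Y \<noteq> {}"
  defines "A \<equiv> {C \<in> components R X. C \<inter> Y \<noteq> {}}"
  shows "components (R \<union> Y \<times> Y) X = (components R X - A) \<union> {\<Union>A}"
proof -
  define U where "U = {q. \<exists>y\<in>Y. (y, q) \<in> R\<^sup>*}"
  have "\<Union>A = U"
  proof
    show "\<Union>A \<subseteq> U"
      unfolding A_def components_def U_def
      using component_eq[OF assms(1)] by (fastforce simp: component_def)
    show "U \<subseteq> \<Union>A"
      unfolding A_def components_def U_def using assms(2) component_refl
      by (fastforce simp: component_def)
  qed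
  moreover have "components (R \<union> Y \<times> Y) X = (components R X - A) \<union> {U}"
  proof -
    obtain y where "y \<in> Y" using assms(3) by auto
    then have "y \<in> X" "component R y \<inter> Y \<noteq> {}" using assms(2) component_refl[of y R] by auto
    then show ?thesis
      unfolding components_def A_def U_def component_Un_clique[OF assms(1)] by auto
  qed
  ultimately show ?thesis by simp
qed

lemma card_components_Un_clique:
  assumes "sym R" and "Y \<subseteq> X" and "Y \<noteq> {}" and "finite X"
  defines "A \<equiv> {C \<in> components R X. C \<inter> Y \<noteq> {}}"
  shows "card (components (R \<union> Y \<times> Y) X) + card A = card (components R X) + 1"
proof -
  obtain y where y: "y \<in> Y" using assms(3) by auto
  have fin: "finite (components R X)" using finite_components[OF assms(4)] .
  have AP: "A \<subseteq> components R X" unfolding A_def by auto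
  have "component R y \<in> A"
    using y assms(2) component_refl[of y R] unfolding A_def components_def by blast
  then have "\<Union>A \<notin> components R X - A"
    using y component_refl[of y R] unfolding A_def by blast
  then have "card (components (R \<union> Y \<times> Y) X) = card (components R X - A) + 1"
    unfolding components_Un_clique[OF assms(1-3), folded A_def] using fin by simp
  moreover have "card (components R X - A) + card A = card (components R X)"
    using card_Diff_subset[OF finite_subset[OF AP fin] AP] card_mono[OF fin AP] by simp
  ultimately show ?thesis by simp
qed

section \<open>Components of the threshold graphs\<close>

definition adj_at :: "('a set \<Rightarrow> real) \<Rightarrow> real \<Rightarrow> 'a \<Rightarrow> 'a \<Rightarrow> bool" where
  "adj_at w t a b \<longleftrightarrow> a \<noteq> b \<and> w {a, b} \<le> t"

definition level_rel :: "('a set \<Rightarrow> real) \<Rightarrow> real \<Rightarrow> 'a set \<Rightarrow> ('a \<times> 'a) set" where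
  "level_rel w t X = {(a, b). a \<in> X \<and> b \<in> X \<and> adj_at w t a b}"

definition ncomp_at :: "('a set \<Rightarrow> real) \<Rightarrow> real \<Rightarrow> 'a set \<Rightarrow> nat" where
  "ncomp_at w t X = card (components (level_rel w t X) X)"

definition adj_comps :: "('a set \<Rightarrow> real) \<Rightarrow> real \<Rightarrow> 'a set \<Rightarrow> 'a \<Rightarrow> 'a set set" where
  "adj_comps w t X x = {C \<in> components (level_rel w t X) X. \<exists>c\<in>C. adj_at w t x c}"

lemma adj_at_sym: "adj_at w t a b = adj_at w t b a"
  unfolding adj_at_def by (auto simp: insert_commute)

lemma sym_level_rel: "sym (level_rel w t X)"
  unfolding level_rel_def sym_def using adj_at_sym by fast

lemma level_rel_subset: "level_rel w t X \<subseteq> X \<times> X"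
  unfolding level_rel_def by auto

lemma components_level_subset:
  assumes "C \<in> components (level_rel w t X) X"
  shows "C \<subseteq> X"
proof -
  obtain a where "a \<in> X" "C = component (level_rel w t X) a"
    using assms unfolding components_def by auto
  then show ?thesis using component_subset[OF level_rel_subset] by simp
qed

lemma insert_notin_components_level: "x \<notin> X \<Longrightarrow> insert x B \<notin> components (level_rel w t X) X"
  by (meson components_level_subset insert_subset)

lemma adj_comps_subset: "adj_comps w t X x \<subseteq> components (level_rel w t X) X"
  unfolding adj_comps_def by auto

lemma finite_adj_comps: "finite X \<Longrightarrow> finite (adj_comps w t X x)"
  using finite_subset[OF adj_comps_subset finite_components] .

lemma rtrancl_level_rel_insert:
  fixes w :: "'a set \<Rightarrow> real" and t :: real
  assumes "x \<notin> X"
  defines "Y \<equiv> insert x {c \<in> X. adj_at w t x c}"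
  shows "(level_rel w t (insert x X))\<^sup>* = (level_rel w t X \<union> Y \<times> Y)\<^sup>*"
proof (rule rtrancl_eqI)
  show "level_rel w t (insert x X) \<subseteq> (level_rel w t X \<union> Y \<times> Y)\<^sup>*"
    unfolding level_rel_def Y_def using adj_at_sym by fastforce
  have "(a, b) \<in> (level_rel w t (insert x X))\<^sup>*" if "a \<in> Y" "b \<in> Y" for a b
  proof -
    have "a = x \<or> (a, x) \<in> level_rel w t (insert x X)" "b = x \<or> (x, b) \<in> level_rel w t (insert x X)"
      using that adj_at_sym unfolding Y_def level_rel_def by fastforce+
    then show ?thesis by (meson r_into_rtrancl rtrancl.rtrancl_refl rtrancl_trans)
  qed
  moreover have "level_rel w t X \<subseteq> level_rel w t (insert x X)"
    unfolding level_rel_def by auto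
  ultimately show "level_rel w t X \<union> Y \<times> Y \<subseteq> (level_rel w t (insert x X))\<^sup>*"
    by auto
qed

lemma components_level_insert:
  assumes "x \<notin> X"
  shows "components (level_rel w t (insert x X)) (insert x X) =
           (components (level_rel w t X) X - adj_comps w t X x) \<union> {insert x (\<Union>(adj_comps w t X x))}"
proof -
  define R where "R = level_rel w t X"
  define Y where "Y = insert x {c \<in> X. adj_at w t x c}"
  define A where "A = {C \<in> components R (insert x X). C \<inter> Y \<noteq> {}}"
  have comps: "components R (insert x X) = insert {x} (components R X)"
    using component_isolated[OF level_rel_subset assms] unfolding R_def components_def by simp
  have "C \<inter> Y \<noteq> {} \<longleftrightarrow> (\<exists>c\<in>C. adj_at w t x c)" if "C \<in> components R X" for C
    using that components_level_subset assms unfolding R_def Y_def by blast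
  then have "{C \<in> components R X. C \<inter> Y \<noteq> {}} = adj_comps w t X x"
    unfolding adj_comps_def R_def by auto
  moreover have "A = insert {x} {C \<in> components R X. C \<inter> Y \<noteq> {}}"
    unfolding A_def comps Y_def by auto
  ultimately have A: "A = insert {x} (adj_comps w t X x)"
    by simp
  have "components (level_rel w t (insert x X)) (insert x X) = components (R \<union> Y \<times> Y) (insert x X)"
    using components_cong[OF rtrancl_level_rel_insert[OF assms]] unfolding R_def Y_def by simp
  also have "\<dots> = (components R (insert x X) - A) \<union> {\<Union>A}"
    unfolding A_def by (rule components_Un_clique) (auto simp: R_def Y_def sym_level_rel)
  also have "\<dots> = (components R X - adj_comps w t X x) \<union> {insert x (\<Union>(adj_comps w t X x))}"
    using insert_notin_components_level[OF assms, where B="{}" and w=w and t=t]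
    unfolding comps A by (auto simp: R_def)
  finally show ?thesis unfolding R_def .
qed

lemma ncomp_at_insert:
  assumes "finite X" and "x \<notin> X"
  shows "int (ncomp_at w t (insert x X)) = int (ncomp_at w t X) + 1 - int (card (adj_comps w t X x))"
proof -
  have fin: "finite (components (level_rel w t X) X)" using finite_components[OF assms(1)] .
  have "ncomp_at w t (insert x X) = card (components (level_rel w t X) X - adj_comps w t X x) + 1"
    unfolding ncomp_at_def components_level_insert[OF assms(2)]
    using insert_notin_components_level[OF assms(2)] fin by simp
  then show ?thesis
    unfolding ncomp_at_def
    using card_Diff_subset[OF finite_adj_comps[OF assms(1)] adj_comps_subset] card_mono[OF fin adj_comps_subset]
    by (simp add: of_nat_diff)
qed

lemma adj_comps_insert:
  assumes "x \<notin> X" and "z \<noteq> x"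
  shows "adj_comps w t (insert x X) z = (adj_comps w t X z - adj_comps w t X x) \<union>
           (if adj_at w t z x \<or> adj_comps w t X z \<inter> adj_comps w t X x \<noteq> {}
            then {insert x (\<Union>(adj_comps w t X x))} else {})"
proof -
  define Ax where "Ax = adj_comps w t X x"
  define B where "B = insert x (\<Union>Ax)"
  have "adj_comps w t (insert x X) z = {C \<in> (components (level_rel w t X) X - Ax) \<union> {B}. \<exists>c\<in>C. adj_at w t z c}"
    unfolding adj_comps_def[of w t "insert x X"] components_level_insert[OF assms(1)] Ax_def B_def ..
  also have "\<dots> = (adj_comps w t X z - Ax) \<union> (if \<exists>c\<in>B. adj_at w t z c then {B} else {})"
    unfolding adj_comps_def by auto
  also have "(\<exists>c\<in>B. adj_at w t z c) \<longleftrightarrow> adj_at w t z x \<or> adj_comps w t X z \<inter> Ax \<noteq> {}"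
    unfolding B_def Ax_def adj_comps_def by blast
  finally show ?thesis unfolding Ax_def B_def .
qed

definition common_comps :: "('a set \<Rightarrow> real) \<Rightarrow> real \<Rightarrow> 'a set \<Rightarrow> 'a \<Rightarrow> 'a \<Rightarrow> 'a set set" where
  "common_comps w t X u v = adj_comps w t X u \<inter> adj_comps w t X v"

definition f_at :: "('a set \<Rightarrow> real) \<Rightarrow> real \<Rightarrow> 'a \<Rightarrow> 'a \<Rightarrow> 'a set \<Rightarrow> int" where
  "f_at w t u v X = int (ncomp_at w t (insert u X)) + int (ncomp_at w t (insert v X))
     - int (ncomp_at w t X) - int (ncomp_at w t (insert u (insert v X)))"

lemma finite_common_comps: "finite X \<Longrightarrow> finite (common_comps w t X u v)"
  unfolding common_comps_def using finite_adj_comps[of X w t u] by simp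

lemma f_at_eq:
  assumes "finite X" and "u \<notin> X" and "v \<notin> X" and "u \<noteq> v"
  shows "f_at w t u v X = (if adj_at w t u v \<or> common_comps w t X u v \<noteq> {} then 1 else 0)
                            - int (card (common_comps w t X u v))"
proof -
  define Au where "Au = adj_comps w t X u"
  define Av where "Av = adj_comps w t X v"
  have "insert v (\<Union>Av) \<notin> Au - Av"
    using insert_notin_components_level[OF assms(3), where B="\<Union>Av" and w=w and t=t] adj_comps_subset[of w t X u]
    unfolding Au_def by blast
  moreover have "card (Au - Av) = card Au - card (Au \<inter> Av)" "card (Au \<inter> Av) \<le> card Au"
    using finite_adj_comps[OF assms(1)] unfolding Au_def by (auto simp: card_Diff_subset_Int Diff_Int2 card_mono)
  ultimately have "int (card (adj_comps w t (insert v X) u)) =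
      int (card Au) - int (card (Au \<inter> Av)) + (if adj_at w t u v \<or> Au \<inter> Av \<noteq> {} then 1 else 0)"
    unfolding adj_comps_insert[OF assms(3,4)] Au_def Av_def[symmetric]
    using finite_adj_comps[OF assms(1)] by (auto simp: of_nat_diff)
  moreover have "int (ncomp_at w t (insert u (insert v X))) =
      int (ncomp_at w t (insert v X)) + 1 - int (card (adj_comps w t (insert v X) u))"
    using ncomp_at_insert[of "insert v X" u] assms by simp
  ultimately show ?thesis
    using ncomp_at_insert[OF assms(1,2), where w=w and t=t] ncomp_at_insert[OF assms(1,3), where w=w and t=t]
    unfolding f_at_def common_comps_def Au_def Av_def by linarith
qed

lemma f_at_nonpos_if_nonadj:
  assumes "finite X" "u \<notin> X" "v \<notin> X" "u \<noteq> v" "\<not> adj_at w t u v"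
  shows "f_at w t u v X \<le> 0"
  using f_at_eq[OF assms(1-4)] assms(5) finite_common_comps[OF assms(1)]
  by (simp add: card_gt_0_iff Suc_leI)

lemma f_at_nonpos_if_common_nbr:
  assumes "finite X" "u \<notin> X" "v \<notin> X" "u \<noteq> v" and "z \<in> X" "adj_at w t u z" "adj_at w t v z"
  shows "f_at w t u v X \<le> 0"
proof -
  have "component (level_rel w t X) z \<in> common_comps w t X u v"
    unfolding common_comps_def adj_comps_def components_def
    using assms(5-7) component_refl[of z "level_rel w t X"] by auto
  then have "card (common_comps w t X u v) > 0"
    using finite_common_comps[OF assms(1)] card_gt_0_iff by blast
  then show ?thesis
    using f_at_eq[OF assms(1-4)] by auto
qed

lemma common_comps_insert:
  fixes w :: "'a set \<Rightarrow> real" and t :: real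
  assumes "s \<notin> T" and "u \<noteq> s" and "v \<noteq> s"
  defines "B \<equiv> insert s (\<Union>(adj_comps w t T s))"
  shows "common_comps w t (insert s T) u v = (common_comps w t T u v - adj_comps w t T s) \<union>
    (if (adj_at w t u s \<or> adj_comps w t T u \<inter> adj_comps w t T s \<noteq> {}) \<and>
        (adj_at w t v s \<or> adj_comps w t T v \<inter> adj_comps w t T s \<noteq> {}) then {B} else {})"
proof -
  have "B \<notin> adj_comps w t T u" "B \<notin> adj_comps w t T v"
    using insert_notin_components_level[OF assms(1), where B="\<Union>(adj_comps w t T s)" and w=w and t=t]
      adj_comps_subset[of w t T u] adj_comps_subset[of w t T v]
    unfolding B_def by blast+
  then show ?thesis
    unfolding common_comps_def adj_comps_insert[OF assms(1,2)] adj_comps_insert[OF assms(1,3)] B_def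
    by auto
qed

lemma card_common_comps_insert_ge:
  assumes "finite T" and "s \<notin> T" and "u \<noteq> s" and "v \<noteq> s"
    and "card (common_comps w t T u v \<inter> adj_comps w t T s) \<le> 1"
  shows "card (common_comps w t T u v) \<le> card (common_comps w t (insert s T) u v)"
proof -
  define M where "M = common_comps w t T u v"
  define B where "B = insert s (\<Union>(adj_comps w t T s))"
  have fin: "finite M" using finite_common_comps[OF assms(1)] unfolding M_def .
  have B: "B \<notin> M - adj_comps w t T s"
    using insert_notin_components_level[OF assms(2), where B="\<Union>(adj_comps w t T s)" and w=w and t=t]
      adj_comps_subset[of w t T u]
    unfolding M_def B_def common_comps_def by blast
  show ?thesis
  proof (cases "M \<inter> adj_comps w t T s = {}")
    case True
    then have "M \<subseteq> common_comps w t (insert s T) u v"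
      unfolding common_comps_insert[OF assms(2-4)] M_def by auto
    moreover have "finite (common_comps w t (insert s T) u v)"
      by (simp add: finite_common_comps assms(1))
    ultimately show ?thesis
      unfolding M_def by (simp add: card_mono)
  next
    case False
    then have "adj_comps w t T u \<inter> adj_comps w t T s \<noteq> {}" "adj_comps w t T v \<inter> adj_comps w t T s \<noteq> {}"
      unfolding M_def common_comps_def by auto
    then have "common_comps w t (insert s T) u v = insert B (M - adj_comps w t T s)"
      unfolding common_comps_insert[OF assms(2-4)] M_def B_def by auto
    moreover have "card (M \<inter> adj_comps w t T s) = 1"
      using False assms(5) fin unfolding M_def by (simp add: le_Suc_eq card_gt_0_iff)
    ultimately show ?thesis
      using B fin card_Diff_subset_Int[of M "adj_comps w t T s"] card_mono[OF fin, of "M \<inter> adj_comps w t T s"]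
      unfolding M_def[symmetric] by (simp add: Diff_Int2)
  qed
qed

lemma f_at_insert_le:
  assumes "finite T" and "s \<notin> T" and "u \<notin> T" and "v \<notin> T" and "s \<noteq> u" "s \<noteq> v" "u \<noteq> v"
    and "card (common_comps w t T u v \<inter> adj_comps w t T s) \<le> 1"
  shows "f_at w t u v (insert s T) \<le> f_at w t u v T"
proof -
  have "card (common_comps w t T u v) \<le> card (common_comps w t (insert s T) u v)"
    using card_common_comps_insert_ge[OF assms(1,2) _ _ assms(8)] assms(5,6) by auto
  then show ?thesis
    using f_at_eq[OF assms(1,3,4,7)] f_at_eq[of "insert s T" u v w t] assms(1-7)
      finite_common_comps[of "insert s T"] finite_common_comps[OF assms(1)]
    by (fastforce simp: Suc_le_eq card_gt_0_iff)
qed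

section \<open>Kruskal's algorithm\<close>

definition edge_rel :: "'a set set \<Rightarrow> ('a \<times> 'a) set" where
  "edge_rel F = {(a, b). {a, b} \<in> F}"

definition ncomp :: "'a set \<Rightarrow> 'a set set \<Rightarrow> nat" where
  "ncomp X F = card (components (edge_rel F) X)"

definition level_edges :: "('a set \<Rightarrow> real) \<Rightarrow> real \<Rightarrow> 'a set \<Rightarrow> 'a set set" where
  "level_edges w t X = {e \<in> cedges X. w e \<le> t}"

lemma cedges_iff: "{a, b} \<in> cedges X \<longleftrightarrow> a \<in> X \<and> b \<in> X \<and> a \<noteq> b"
  unfolding cedges_def by (auto simp: doubleton_eq_iff)

lemma singleton_notin_cedges: "{a} \<notin> cedges X"
  using cedges_iff[of a a X] by simp

lemma cedges_doubleton: "e \<in> cedges X \<Longrightarrow> \<exists>a b. e = {a, b} \<and> a \<in> X \<and> b \<in> X \<and> a \<noteq> b"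
  unfolding cedges_def by auto

lemma cedges_mono: "X \<subseteq> Y \<Longrightarrow> cedges X \<subseteq> cedges Y"
  unfolding cedges_def by auto

lemma finite_cedges: "finite X \<Longrightarrow> finite (cedges X)"
proof -
  assume "finite X"
  moreover have "cedges X \<subseteq> (\<lambda>(x, y). {x, y}) ` (X \<times> X)"
    unfolding cedges_def by auto
  ultimately show ?thesis by (meson finite_SigmaI finite_imageI finite_subset)
qed

lemma sym_edge_rel: "sym (edge_rel F)"
  unfolding edge_rel_def sym_def by (auto simp: insert_commute)

lemma edge_rel_mono: "F \<subseteq> G \<Longrightarrow> edge_rel F \<subseteq> edge_rel G"
  unfolding edge_rel_def by auto

lemma edge_rel_level_edges: "edge_rel (level_edges w t X) = level_rel w t X"
  unfolding edge_rel_def level_edges_def level_rel_def adj_at_def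
  by (auto simp: cedges_iff singleton_notin_cedges)

lemma ncomp_level_edges: "ncomp X (level_edges w t X) = ncomp_at w t X"
  unfolding ncomp_def ncomp_at_def edge_rel_level_edges ..

lemma rtrancl_edge_rel_insert: "(edge_rel (insert {a, b} F))\<^sup>* = (edge_rel F \<union> {a, b} \<times> {a, b})\<^sup>*"
proof (rule rtrancl_eqI)
  show "edge_rel (insert {a, b} F) \<subseteq> (edge_rel F \<union> {a, b} \<times> {a, b})\<^sup>*"
    unfolding edge_rel_def by (auto simp: doubleton_eq_iff)
  have "(p, q) \<in> (edge_rel (insert {a, b} F))\<^sup>*" if "p \<in> {a, b}" "q \<in> {a, b}" for p q
    using that by (cases "p = q") (auto simp: edge_rel_def insert_commute intro!: r_into_rtrancl)
  then show "edge_rel F \<union> {a, b} \<times> {a, b} \<subseteq> (edge_rel (insert {a, b} F))\<^sup>*"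
    using edge_rel_mono[of F "insert {a, b} F"] by auto
qed

lemma ncomp_insert_edge:
  assumes "finite X" and "F \<subseteq> cedges X" and "{a, b} \<in> cedges X"
  shows "(a, b) \<in> (edge_rel F)\<^sup>* \<Longrightarrow> ncomp X (insert {a, b} F) = ncomp X F"
    and "(a, b) \<notin> (edge_rel F)\<^sup>* \<Longrightarrow> ncomp X (insert {a, b} F) + 1 = ncomp X F"
proof -
  let ?R = "edge_rel F"
  define A where "A = {C \<in> components ?R X. C \<inter> {a, b} \<noteq> {}}"
  have ab: "a \<in> X" "b \<in> X" using assms(3) by (simp_all add: cedges_iff)
  have "ncomp X (insert {a, b} F) = card (components (?R \<union> {a, b} \<times> {a, b}) X)"
    unfolding ncomp_def using components_cong[OF rtrancl_edge_rel_insert] by metis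
  then have card: "ncomp X (insert {a, b} F) + card A = ncomp X F + 1"
    using card_components_Un_clique[OF sym_edge_rel _ _ assms(1), of "{a, b}" F] ab
    unfolding ncomp_def A_def by simp
  have "A = {component ?R a, component ?R b}"
  proof
    show "A \<subseteq> {component ?R a, component ?R b}"
    proof
      fix C assume "C \<in> A"
      then obtain c y where "C = component ?R c" "y \<in> C" "y \<in> {a, b}"
        unfolding A_def components_def by blast
      then have "C = component ?R y" using component_eq[OF sym_edge_rel] by metis
      then show "C \<in> {component ?R a, component ?R b}" using \<open>y \<in> {a, b}\<close> by blast
    qed
    show "{component ?R a, component ?R b} \<subseteq> A"
      unfolding A_def components_def using ab component_refl[of _ ?R] by blast
  qed
  then have "card A = (if (a, b) \<in> ?R\<^sup>* then 1 else 2)"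
    by (simp add: component_eq_iff[OF sym_edge_rel] card_insert_if)
  then show "(a, b) \<in> ?R\<^sup>* \<Longrightarrow> ncomp X (insert {a, b} F) = ncomp X F"
    and "(a, b) \<notin> ?R\<^sup>* \<Longrightarrow> ncomp X (insert {a, b} F) + 1 = ncomp X F"
    using card by auto
qed

lemma ncomp_Un_bounds:
  assumes fin: "finite X" and F: "F \<subseteq> cedges X" and D: "finite D" "D \<subseteq> cedges X"
  shows "ncomp X (F \<union> D) \<le> ncomp X F \<and> ncomp X F \<le> ncomp X (F \<union> D) + card D"
  using D
proof (induction D rule: finite_induct)
  case empty then show ?case by simp
next
  case (insert e D)
  obtain a b where e: "e = {a, b}" "a \<in> X" "b \<in> X" "a \<noteq> b" using insert.prems cedges_doubleton by blast
  have FD: "F \<union> D \<subseteq> cedges X" using F insert.prems by auto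
  have eX: "{a, b} \<in> cedges X" using e by (simp add: cedges_iff)
  have IH: "ncomp X (F \<union> D) \<le> ncomp X F \<and> ncomp X F \<le> ncomp X (F \<union> D) + card D" using insert by simp
  have eq: "F \<union> insert e D = insert {a, b} (F \<union> D)" using e by simp
  have cD: "card (insert e D) = card D + 1" using insert.hyps by simp
  show ?case
  proof (cases "(a, b) \<in> (edge_rel (F \<union> D))\<^sup>*")
    case True
    then show ?thesis using ncomp_insert_edge(1)[OF fin FD eX] IH eq cD by simp
  next
    case False
    then show ?thesis using ncomp_insert_edge(2)[OF fin FD eX] IH eq cD by simp
  qed
qed

lemma ncomp_connected:
  assumes "x \<in> X" and "\<forall>y\<in>X. \<forall>z\<in>X. (y, z) \<in> (edge_rel F)\<^sup>*"
  shows "ncomp X F = 1"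
proof -
  have "component (edge_rel F) y = component (edge_rel F) x" if "y \<in> X" for y
    using assms that by (simp add: component_eq_iff[OF sym_edge_rel])
  then have "components (edge_rel F) X = {component (edge_rel F) x}"
    unfolding components_def using assms(1) by blast
  then show ?thesis unfolding ncomp_def by simp
qed

lemma ncomp_empty:
  assumes fin: "finite X"
  shows "ncomp X {} = card X"
proof -
  have e: "edge_rel {} = {}" unfolding edge_rel_def by simp
  have c: "component (edge_rel {}) a = {a}" for a unfolding component_def e by simp
  have "components (edge_rel {}) X = (\<lambda>a. {a}) ` X" unfolding components_def by (simp add: c)
  moreover have "inj_on (\<lambda>a. {a}) X" by (auto simp: inj_on_def)
  ultimately show ?thesis unfolding ncomp_def by (simp add: card_image)
qed

lemma spanning_tree_light_edges:
  assumes fin: "finite X" and ne: "X \<noteq> {}" and T: "is_spanning_tree X T"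
  shows "card {e \<in> T. w e \<le> t} + ncomp_at w t X \<le> card X"
proof -
  have TX: "T \<subseteq> cedges X" and cT: "card T = card X - 1"
    and con: "\<forall>x\<in>X. \<forall>y\<in>X. (x, y) \<in> (edge_rel T)\<^sup>*"
    using T unfolding is_spanning_tree_def edge_rel_def by auto
  have finT: "finite T" using finite_subset[OF TX finite_cedges[OF fin]] .
  define F where "F = {e \<in> T. w e \<le> t}"
  have FX: "F \<subseteq> cedges X" using TX unfolding F_def by auto
  have "F \<union> (T - F) = T" unfolding F_def by auto
  then have b1: "ncomp X F \<le> ncomp X T + card (T - F)"
    using ncomp_Un_bounds[OF fin FX, of "T - F"] finT TX by auto
  obtain x where "x \<in> X" using ne by blast
  then have "ncomp X T = 1" by (rule ncomp_connected[OF _ con])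
  moreover have "card (T - F) = card T - card F"
    using card_Diff_subset[of F T] finT unfolding F_def by auto
  moreover have "card F \<le> card T" using card_mono[OF finT] unfolding F_def by auto
  moreover have "ncomp_at w t X \<le> ncomp X F"
  proof -
    have EX: "level_edges w t X \<subseteq> cedges X" unfolding level_edges_def by auto
    have FE: "F \<subseteq> level_edges w t X" unfolding F_def level_edges_def using TX by auto
    have "F \<union> (level_edges w t X - F) = level_edges w t X" using FE by auto
    moreover have "finite (level_edges w t X)" using finite_subset[OF EX finite_cedges[OF fin]] .
    ultimately have "ncomp X (level_edges w t X) \<le> ncomp X F"
      using ncomp_Un_bounds[OF fin FX, of "level_edges w t X - F"] EX by auto
    then show ?thesis using ncomp_level_edges by metis
  qed
  moreover have "card X \<ge> 1" using fin ne by (simp add: Suc_leI card_gt_0_iff)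
  ultimately show ?thesis using b1 cT unfolding F_def by linarith
qed

lemma ncomp_at_eq_ncomp:
  assumes "F \<subseteq> level_edges w t X" and "level_rel w t X \<subseteq> (edge_rel F)\<^sup>*"
  shows "ncomp_at w t X = ncomp X F"
proof -
  have "edge_rel F \<subseteq> level_rel w t X"
    using edge_rel_mono[OF assms(1)] by (simp add: edge_rel_level_edges)
  then have "(edge_rel F)\<^sup>* = (level_rel w t X)\<^sup>*"
    using rtrancl_subset[OF _ assms(2)] by simp
  then show ?thesis unfolding ncomp_at_def ncomp_def using components_cong by metis
qed

(* For F \<subseteq> cedges X this says that the graph (X, F) is acyclic. *)
definition forest :: "'a set \<Rightarrow> 'a set set \<Rightarrow> bool" where
  "forest X F \<longleftrightarrow> card F + ncomp X F = card X"

lemma forest_extend: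
  assumes fin: "finite X" and E: "E \<subseteq> cedges X"
  shows "F \<subseteq> cedges X \<Longrightarrow> forest X F \<Longrightarrow> \<exists>F'. F \<subseteq> F' \<and> F' \<subseteq> F \<union> E \<and> forest X F'
      \<and> (\<forall>a b. {a, b} \<in> F' - F \<longrightarrow> (a, b) \<notin> (edge_rel F)\<^sup>*)
      \<and> (\<forall>a b. {a, b} \<in> E \<longrightarrow> (a, b) \<in> (edge_rel F')\<^sup>*)"
proof (induction "ncomp X F" arbitrary: F rule: less_induct)
  case less
  show ?case
  proof (cases "\<forall>a b. {a, b} \<in> E \<longrightarrow> (a, b) \<in> (edge_rel F)\<^sup>*")
    case True
    then show ?thesis using less.prems by (intro exI[of _ F]) auto
  next
    case False
    then obtain a b where ab: "{a, b} \<in> E" "(a, b) \<notin> (edge_rel F)\<^sup>*" by auto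
    have abX: "{a, b} \<in> cedges X" using ab E by auto
    have notF: "{a, b} \<notin> F" using ab(2) unfolding edge_rel_def by auto
    define F1 where "F1 = insert {a, b} F"
    have finF: "finite F" using finite_subset[OF less.prems(1) finite_cedges[OF fin]] .
    have K1: "ncomp X F1 + 1 = ncomp X F" using ncomp_insert_edge(2)[OF fin less.prems(1) abX ab(2)] unfolding F1_def .
    have F1X: "F1 \<subseteq> cedges X" using abX less.prems(1) unfolding F1_def by auto
    have fo1: "forest X F1" using less.prems(2) K1 notF finF unfolding forest_def F1_def by simp
    have "ncomp X F1 < ncomp X F" using K1 by simp
    from less.hyps[OF this F1X fo1] obtain F' where F':
      "F1 \<subseteq> F'" "F' \<subseteq> F1 \<union> E" "forest X F'"
      "\<forall>a b. {a, b} \<in> F' - F1 \<longrightarrow> (a, b) \<notin> (edge_rel F1)\<^sup>*"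
      "\<forall>a b. {a, b} \<in> E \<longrightarrow> (a, b) \<in> (edge_rel F')\<^sup>*" by blast
    have mono: "(edge_rel F)\<^sup>* \<subseteq> (edge_rel F1)\<^sup>*" using edge_rel_mono[of F F1] rtrancl_mono unfolding F1_def by blast
    have new: "(p, q) \<notin> (edge_rel F)\<^sup>*" if "{p, q} \<in> F' - F" for p q
    proof (cases "{p, q} = {a, b}")
      case True
      then have "(p, q) = (a, b) \<or> (p, q) = (b, a)" by (auto simp: doubleton_eq_iff)
      moreover have "(b, a) \<notin> (edge_rel F)\<^sup>*" using ab(2) sym_edge_rel[of F]
        by (meson sym_rtrancl symD)
      ultimately show ?thesis using ab(2) by auto
    next
      case False
      then have "{p, q} \<in> F' - F1" using that unfolding F1_def by auto
      then show ?thesis using F'(4) mono by auto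
    qed
    have "F \<subseteq> F'" using F'(1) unfolding F1_def by auto
    moreover have "F' \<subseteq> F \<union> E" using F'(2) ab(1) unfolding F1_def by auto
    ultimately show ?thesis
      using F'(3,5) new by blast
  qed
qed

lemma light_edges_extend:
  assumes "F \<subseteq> F'" and "F' \<subseteq> cedges X"
    and "\<forall>p q. {p, q} \<in> F' - F \<longrightarrow> (p, q) \<notin> (edge_rel F)\<^sup>*"
    and "level_rel w t X \<subseteq> (edge_rel F)\<^sup>*"
  shows "{e \<in> F'. w e \<le> t} = {e \<in> F. w e \<le> t}"
proof -
  have "e \<in> F" if e: "e \<in> F'" "w e \<le> t" for e
  proof (rule ccontr)
    assume "e \<notin> F"
    obtain p q where pq: "e = {p, q}" "p \<in> X" "q \<in> X" "p \<noteq> q"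
      using e(1) assms(2) cedges_doubleton by blast
    then have "(p, q) \<in> level_rel w t X" using e(2) unfolding level_rel_def adj_at_def by auto
    then show False using assms(3,4) e(1) \<open>e \<notin> F\<close> pq(1) by auto
  qed
  then show ?thesis using assms(1) by auto
qed

lemma kruskal_forest:
  assumes fin: "finite X" and L: "finite L"
  shows "\<exists>F. F \<subseteq> cedges X \<and> forest X F \<and> (\<forall>e\<in>F. \<exists>t\<in>L. w e \<le> t)
            \<and> (\<forall>t\<in>L. level_rel w t X \<subseteq> (edge_rel F)\<^sup>*)
            \<and> (\<forall>t\<in>L. card {e\<in>F. w e \<le> t} + ncomp_at w t X = card X)"
  using L
proof (induction rule: finite_linorder_max_induct)
  case empty
  show ?case
    using ncomp_empty[OF fin] unfolding forest_def by (intro exI[of _ "{}"]) simp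
next
  case (insert b L)
  then obtain F where F: "F \<subseteq> cedges X" "forest X F" "\<forall>e\<in>F. \<exists>t\<in>L. w e \<le> t"
      "\<forall>t\<in>L. level_rel w t X \<subseteq> (edge_rel F)\<^sup>*" "\<forall>t\<in>L. card {e\<in>F. w e \<le> t} + ncomp_at w t X = card X"
    by blast
  have EX: "level_edges w b X \<subseteq> cedges X" unfolding level_edges_def by auto
  obtain F' where F': "F \<subseteq> F'" "F' \<subseteq> F \<union> level_edges w b X" "forest X F'"
      "\<forall>p q. {p, q} \<in> F' - F \<longrightarrow> (p, q) \<notin> (edge_rel F)\<^sup>*"
      "\<forall>p q. {p, q} \<in> level_edges w b X \<longrightarrow> (p, q) \<in> (edge_rel F')\<^sup>*"
    using forest_extend[OF fin EX F(1) F(2)] by blast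
  have F'X: "F' \<subseteq> cedges X" using F'(2) F(1) EX by auto
  have light: "w e \<le> b" if "e \<in> F'" for e
    using that F'(2) F(3) insert.hyps(2) unfolding level_edges_def by fastforce
  have conn_b: "level_rel w b X \<subseteq> (edge_rel F')\<^sup>*"
    using F'(5) unfolding edge_rel_level_edges[symmetric] edge_rel_def by auto
  have "ncomp_at w b X = ncomp X F'"
    using ncomp_at_eq_ncomp[OF _ conn_b] light F'X unfolding level_edges_def by blast
  moreover have "{e \<in> F'. w e \<le> b} = F'" using light by blast
  ultimately have "card {e \<in> F'. w e \<le> b} + ncomp_at w b X = card X"
    using F'(3) unfolding forest_def by simp
  moreover have "card {e \<in> F'. w e \<le> t} + ncomp_at w t X = card X" if "t \<in> L" for t
    using light_edges_extend[OF F'(1) F'X F'(4)] F(4,5) that by simp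
  moreover have "level_rel w t X \<subseteq> (edge_rel F')\<^sup>*" if "t \<in> L" for t
  proof -
    have "(edge_rel F)\<^sup>* \<subseteq> (edge_rel F')\<^sup>*"
      using edge_rel_mono[OF F'(1)] rtrancl_mono by blast
    then show ?thesis using F(4) that by blast
  qed
  ultimately show ?case
    using F'X F'(3) light conn_b by (intro exI[of _ F']) auto
qed

section \<open>The weight of a minimum spanning tree as a sum over thresholds\<close>

definition next_weight :: "real set \<Rightarrow> real \<Rightarrow> real" where
  "next_weight W t = Min {y \<in> W. t < y}"

lemma sum_gaps_telescope:
  assumes fin: "finite W"
  shows "x \<in> W \<Longrightarrow> (\<Sum>t\<in>{t\<in>W. t < x}. next_weight W t - t) = x - Min W"
proof (induction "card {t\<in>W. t < x}" arbitrary: x rule: less_induct)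
  case less
  show ?case
  proof (cases "{t\<in>W. t < x} = {}")
    case True
    have "W \<noteq> {}" using less.prems by auto
    then have "Min W \<in> W" using fin by simp
    moreover have "Min W \<le> x" using less.prems fin by simp
    ultimately have "Min W = x" using True by force
    moreover have "(\<Sum>t\<in>{t\<in>W. t < x}. next_weight W t - t) = 0" by (simp only: True sum.empty)
    ultimately show ?thesis by simp
  next
    case False
    define p where "p = Max {t\<in>W. t < x}"
    have fS: "finite {t\<in>W. t < x}" using fin by simp
    have p: "p \<in> W" "p < x" using Max_in[OF fS False] unfolding p_def by auto
    have pmax: "t \<le> p" if "t \<in> W" "t < x" for t using Max_ge[OF fS] that unfolding p_def by auto
    have S: "{t\<in>W. t < x} = insert p {t\<in>W. t < p}" using p pmax by force
    have nx: "next_weight W p = x"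
    proof -
      have f2: "finite {y \<in> W. p < y}" using fin by simp
      have "x \<in> {y \<in> W. p < y}" using p less.prems by simp
      moreover have "\<forall>y\<in>{y \<in> W. p < y}. x \<le> y" using pmax by force
      ultimately show ?thesis unfolding next_weight_def using f2 by (intro Min_eqI) auto
    qed
    have "card {t\<in>W. t < p} < card {t\<in>W. t < x}"
      using S fS by (simp add: card_insert_if)
    then have IH: "(\<Sum>t\<in>{t\<in>W. t < p}. next_weight W t - t) = p - Min W" using less.hyps p by blast
    have "(\<Sum>t\<in>{t\<in>W. t < x}. next_weight W t - t) = (next_weight W p - p) + (\<Sum>t\<in>{t\<in>W. t < p}. next_weight W t - t)"
      unfolding S using fin by (simp add: sum.insert)
    then show ?thesis using IH nx by simp
  qed
qed

lemma next_weight_gt: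
  assumes fin: "finite W" and t: "t \<in> W" "t < Max W"
  shows "next_weight W t > t"
proof -
  have ne: "{y \<in> W. t < y} \<noteq> {}" using t fin by (metis (mono_tags, lifting) Max_in empty_Collect_eq empty_iff)
  have "next_weight W t \<in> {y \<in> W. t < y}" unfolding next_weight_def using fin ne by (intro Min_in) auto
  then show ?thesis by simp
qed

lemma sum_weights_by_levels:
  assumes fin: "finite W" and F: "finite F" and FW: "\<forall>e\<in>F. w e \<in> W"
  shows "(\<Sum>e\<in>F. w e) = Min W * real (card F)
           + (\<Sum>t\<in>{t\<in>W. t < Max W}. (next_weight W t - t) * real (card {e\<in>F. t < w e}))"
proof -
  define W' where "W' = {t\<in>W. t < Max W}"
  have we: "w e = Min W + (\<Sum>t\<in>W'. if t < w e then next_weight W t - t else 0)" if "e \<in> F" for e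
  proof -
    have wW: "w e \<in> W" using FW that by auto
    have "w e \<le> Max W" using wW fin by simp
    then have "{t\<in>W'. t < w e} = {t\<in>W. t < w e}" unfolding W'_def by auto
    moreover have "finite W'" using fin unfolding W'_def by simp
    then have "(\<Sum>t\<in>W'. if t < w e then next_weight W t - t else 0) = (\<Sum>t\<in>{t\<in>W'. t < w e}. next_weight W t - t)"
      by (simp only: sum.inter_filter)
    ultimately show ?thesis using sum_gaps_telescope[OF fin wW] by simp
  qed
  have "(\<Sum>e\<in>F. w e) = (\<Sum>e\<in>F. Min W + (\<Sum>t\<in>W'. if t < w e then next_weight W t - t else 0))"
    using we by (rule sum.cong[OF refl])
  also have "\<dots> = Min W * real (card F) + (\<Sum>e\<in>F. \<Sum>t\<in>W'. if t < w e then next_weight W t - t else 0)"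
    by (simp add: sum.distrib)
  also have "(\<Sum>e\<in>F. \<Sum>t\<in>W'. if t < w e then next_weight W t - t else 0)
        = (\<Sum>t\<in>W'. \<Sum>e\<in>F. if t < w e then next_weight W t - t else 0)"
    by (rule sum.swap)
  also have "\<dots> = (\<Sum>t\<in>W'. (next_weight W t - t) * real (card {e\<in>F. t < w e}))"
  proof (rule sum.cong[OF refl])
    fix t
    have "(\<Sum>e\<in>F. if t < w e then next_weight W t - t else 0) = (\<Sum>e\<in>{e\<in>F. t < w e}. next_weight W t - t)"
      by (simp only: sum.inter_filter[OF F])
    then show "(\<Sum>e\<in>F. if t < w e then next_weight W t - t else 0) = (next_weight W t - t) * real (card {e\<in>F. t < w e})"
      by (simp add: mult.commute)
  qed
  finally show ?thesis unfolding W'_def .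
qed

definition level_cost :: "('a set \<Rightarrow> real) \<Rightarrow> real set \<Rightarrow> 'a set \<Rightarrow> real" where
  "level_cost w W X = Min W * (real (card X) - 1)
     + (\<Sum>t\<in>{t\<in>W. t < Max W}. (next_weight W t - t) * (real (ncomp_at w t X) - 1))"

lemma level_cost_le_weight:
  assumes "finite W" and "finite X" and "X \<noteq> {}" and "is_spanning_tree X T" and "\<forall>e\<in>T. w e \<in> W"
  shows "level_cost w W X \<le> (\<Sum>e\<in>T. w e)"
proof -
  have TX: "T \<subseteq> cedges X" and cT: "card T = card X - 1"
    using assms(4) unfolding is_spanning_tree_def by auto
  have finT: "finite T" using finite_subset[OF TX finite_cedges[OF assms(2)]] .
  have cX: "card X \<ge> 1" using assms(2,3) by (simp add: Suc_leI card_gt_0_iff)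
  have heavy: "real (ncomp_at w t X) - 1 \<le> real (card {e\<in>T. t < w e})" for t
  proof -
    have "{e\<in>T. t < w e} = T - {e \<in> T. w e \<le> t}" by auto
    then have "card {e\<in>T. t < w e} = card T - card {e \<in> T. w e \<le> t}"
      using finT by (simp add: card_Diff_subset)
    moreover have "card {e \<in> T. w e \<le> t} \<le> card T" using card_mono[OF finT] by auto
    ultimately show ?thesis
      using spanning_tree_light_edges[OF assms(2-4), of w t] cT cX by linarith
  qed
  have "(\<Sum>t\<in>{t\<in>W. t < Max W}. (next_weight W t - t) * (real (ncomp_at w t X) - 1))
      \<le> (\<Sum>t\<in>{t\<in>W. t < Max W}. (next_weight W t - t) * real (card {e\<in>T. t < w e}))"
    using next_weight_gt[OF assms(1)] heavy by (intro sum_mono mult_left_mono) (auto simp: less_imp_le)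
  then show ?thesis
    using sum_weights_by_levels[OF assms(1) finT assms(5)] cT cX by (simp add: level_cost_def)
qed

lemma spanning_tree_of_level_cost:
  assumes "finite W" and "finite X" and "X \<noteq> {}" and "w ` cedges X \<subseteq> W"
  shows "\<exists>T. is_spanning_tree X T \<and> (\<Sum>e\<in>T. w e) = level_cost w W X"
proof -
  obtain F where F: "F \<subseteq> cedges X" "forest X F"
      "\<forall>t\<in>W. level_rel w t X \<subseteq> (edge_rel F)\<^sup>*" "\<forall>t\<in>W. card {e\<in>F. w e \<le> t} + ncomp_at w t X = card X"
    using kruskal_forest[OF assms(2,1), of w] by blast
  have finF: "finite F" using finite_subset[OF F(1) finite_cedges[OF assms(2)]] .
  have cX: "card X \<ge> 1" using assms(2,3) by (simp add: Suc_leI card_gt_0_iff)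
  have con: "\<forall>x\<in>X. \<forall>y\<in>X. (x, y) \<in> (edge_rel F)\<^sup>*"
  proof (intro ballI)
    fix x y assume xy: "x \<in> X" "y \<in> X"
    show "(x, y) \<in> (edge_rel F)\<^sup>*"
    proof (cases "x = y")
      case False
      then have "w {x, y} \<in> W" using xy assms(4) by (auto simp: cedges_iff)
      then have "(x, y) \<in> level_rel w (Max W) X"
        using xy False assms(1) unfolding level_rel_def adj_at_def by auto
      moreover have "Max W \<in> W"
        using \<open>w {x, y} \<in> W\<close> Max_in[OF assms(1)] by blast
      ultimately show ?thesis using F(3) by blast
    qed simp
  qed
  then have cF: "card F = card X - 1"
    using F(2) ncomp_connected[of _ X F] assms(3) unfolding forest_def by fastforce
  have heavy: "real (card {e\<in>F. t < w e}) = real (ncomp_at w t X) - 1" if "t \<in> W" for t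
  proof -
    have "{e\<in>F. t < w e} = F - {e \<in> F. w e \<le> t}" by auto
    then have "card {e\<in>F. t < w e} = card F - card {e \<in> F. w e \<le> t}"
      using finF by (simp add: card_Diff_subset)
    moreover have "card {e \<in> F. w e \<le> t} \<le> card F" using card_mono[OF finF] by auto
    moreover have "card {e \<in> F. w e \<le> t} + ncomp_at w t X = card X" using F(4) that by blast
    ultimately have "card {e\<in>F. t < w e} + 1 = ncomp_at w t X" using cF cX by linarith
    then show ?thesis by (metis add_diff_cancel_right' of_nat_1 of_nat_add)
  qed
  have "\<forall>e\<in>F. w e \<in> W" using F(1) assms(4) by blast
  then have "(\<Sum>e\<in>F. w e) = Min W * real (card F)
      + (\<Sum>t\<in>{t\<in>W. t < Max W}. (next_weight W t - t) * real (card {e\<in>F. t < w e}))"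
    by (rule sum_weights_by_levels[OF assms(1) finF])
  also have "\<dots> = level_cost w W X"
    using heavy cF cX unfolding level_cost_def by (auto simp: of_nat_diff intro!: sum.cong)
  finally have "(\<Sum>e\<in>F. w e) = level_cost w W X" .
  moreover have "is_spanning_tree X F"
    unfolding is_spanning_tree_def using F(1) cF con unfolding edge_rel_def by simp
  ultimately show ?thesis by blast
qed

lemma mst_eq_level_cost:
  assumes "finite W" and "finite X" and "X \<noteq> {}" and "w ` cedges X \<subseteq> W"
  shows "mst w X = level_cost w W X"
proof -
  have "w ` T \<subseteq> W" if "is_spanning_tree X T" for T
    using that assms(4) unfolding is_spanning_tree_def by auto
  then have "level_cost w W X \<le> (\<Sum>e\<in>T. w e)" if "is_spanning_tree X T" for T
    using level_cost_le_weight[OF assms(1-3) that] that by blast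
  moreover have "finite {T. is_spanning_tree X T}"
    using finite_cedges[OF assms(2)] unfolding is_spanning_tree_def by (simp add: finite_subset)
  moreover obtain T where "is_spanning_tree X T" "(\<Sum>e\<in>T. w e) = level_cost w W X"
    using spanning_tree_of_level_cost[OF assms] by blast
  ultimately show ?thesis
    unfolding mst_def by (intro Min_eqI) force+
qed

lemma f_uv_eq_level_sum:
  assumes "finite W" and "finite X" and "X \<noteq> {}" and "w ` cedges (insert u (insert v X)) \<subseteq> W"
    and "u \<notin> X" and "v \<notin> X" and "u \<noteq> v"
  shows "f_uv w u v X = (\<Sum>t\<in>{t\<in>W. t < Max W}. (next_weight W t - t) * real_of_int (f_at w t u v X))"
proof -
  have mst: "mst w Y = level_cost w W Y" if "Y \<subseteq> insert u (insert v X)" "X \<subseteq> Y" for Y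
  proof (rule mst_eq_level_cost[OF assms(1)])
    show "finite Y" using that(1) assms(2) finite_subset by blast
    show "Y \<noteq> {}" using that(2) assms(3) by blast
    show "w ` cedges Y \<subseteq> W" using cedges_mono[OF that(1)] assms(4) by blast
  qed
  have "card (insert u X) = card X + 1" "card (insert v X) = card X + 1"
    "card (insert u (insert v X)) = card X + 2"
    using assms(2,5-7) by simp_all
  then show ?thesis
    unfolding f_uv_def
    by (simp add: mst level_cost_def f_at_def sum_subtractf[symmetric] sum.distrib[symmetric]
        algebra_simps subset_insertI2)
qed

section \<open>Induced walks and violated cycles\<close>

(* P lists the inner vertices of a walk a, P ! 0, ..., last P, b. *)
definition walk :: "('a \<Rightarrow> 'a \<Rightarrow> bool) \<Rightarrow> 'a \<Rightarrow> 'a \<Rightarrow> 'a list \<Rightarrow> bool" where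
  "walk adj a b P \<longleftrightarrow> P \<noteq> [] \<and> adj a (hd P) \<and> adj (last P) b \<and>
     (\<forall>i. Suc i < length P \<longrightarrow> adj (P ! i) (P ! Suc i))"

definition induced_walk :: "('a \<Rightarrow> 'a \<Rightarrow> bool) \<Rightarrow> 'a \<Rightarrow> 'a \<Rightarrow> 'a list \<Rightarrow> bool" where
  "induced_walk adj a b P \<longleftrightarrow> walk adj a b P \<and> distinct P \<and>
     (\<forall>j. 0 < j \<and> j < length P \<longrightarrow> \<not> adj a (P ! j)) \<and>
     (\<forall>j. Suc j < length P \<longrightarrow> \<not> adj (P ! j) b) \<and>
     (\<forall>i j. Suc i < j \<and> j < length P \<longrightarrow> \<not> adj (P ! i) (P ! j))"

lemma rtrancl_walk:
  assumes "(p, q) \<in> R\<^sup>*"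
  shows "\<exists>xs. xs \<noteq> [] \<and> hd xs = p \<and> last xs = q \<and> set xs \<subseteq> {z. (p, z) \<in> R\<^sup>*} \<and>
           (\<forall>i. Suc i < length xs \<longrightarrow> (xs ! i, xs ! Suc i) \<in> R)"
  using assms
proof (induction rule: rtrancl_induct)
  case base
  show ?case by (intro exI[of _ "[p]"]) auto
next
  case (step b c)
  then obtain xs where xs: "xs \<noteq> []" "hd xs = p" "last xs = b" "set xs \<subseteq> {z. (p, z) \<in> R\<^sup>*}"
    "\<forall>i. Suc i < length xs \<longrightarrow> (xs ! i, xs ! Suc i) \<in> R" by blast
  have "\<forall>i. Suc i < length (xs @ [c]) \<longrightarrow> ((xs @ [c]) ! i, (xs @ [c]) ! Suc i) \<in> R"
  proof (intro allI impI)
    fix i assume i: "Suc i < length (xs @ [c])"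
    show "((xs @ [c]) ! i, (xs @ [c]) ! Suc i) \<in> R"
    proof (cases "Suc i < length xs")
      case True
      then show ?thesis using xs(5) by (simp add: nth_append)
    next
      case False
      then have "i = length xs - 1" "Suc i = length xs" using i by simp_all
      then show ?thesis using xs(1,3) step.hyps(2) by (simp add: nth_append last_conv_nth)
    qed
  qed
  moreover have "(p, c) \<in> R\<^sup>*" using step.hyps by (rule rtrancl_into_rtrancl)
  ultimately show ?case using xs by (intro exI[of _ "xs @ [c]"]) auto
qed

lemma walk_splice:
  assumes P: "walk adj a b P" and ij: "i < j" "j < length P"
    and junc: "if i = 0 then adj a (P ! j) else adj (P ! (i - 1)) (P ! j)"
  shows "walk adj a b (take i P @ drop j P)"
proof -
  let ?Q = "take i P @ drop j P"
  have lenQ: "length ?Q = i + (length P - j)" using ij by simp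
  have nthQ: "?Q ! k = (if k < i then P ! k else P ! (j + k - i))" if "k < length ?Q" for k
    using that ij by (auto simp: nth_append)
  have step: "adj (P ! m) (P ! Suc m)" if "Suc m < length P" for m
    using P that unfolding walk_def by blast
  have hdQ: "adj a (hd ?Q)"
  proof (cases "i = 0")
    case True
    then show ?thesis using junc ij by (simp add: hd_drop_conv_nth)
  next
    case False
    then show ?thesis using ij P unfolding walk_def by (simp add: hd_append)
  qed
  have "adj (?Q ! k) (?Q ! Suc k)" if k: "Suc k < length ?Q" for k
  proof -
    consider "Suc k < i" | "Suc k = i" | "i \<le> k" by linarith
    then show ?thesis
    proof cases
      case 1
      then show ?thesis using nthQ[of k] nthQ[of "Suc k"] k step[of k] ij by simp
    next
      case 2
      then have "?Q ! k = P ! (i - 1)" "?Q ! Suc k = P ! j"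
        using nthQ[of k] nthQ[of "Suc k"] k by auto
      then show ?thesis using junc 2 by (simp split: if_splits)
    next
      case 3
      then have "?Q ! k = P ! (j + k - i)" "?Q ! Suc k = P ! Suc (j + k - i)"
        using nthQ[of k] nthQ[of "Suc k"] k by (auto simp: Suc_diff_le)
      moreover have "Suc (j + k - i) < length P" using k lenQ 3 ij by linarith
      ultimately show ?thesis using step by simp
    qed
  qed
  then show ?thesis
    using hdQ ij P unfolding walk_def by (simp add: last_append)
qed

lemma walk_take:
  assumes "walk adj a b P" and "Suc j < length P" and "adj (P ! j) b"
  shows "walk adj a b (take (Suc j) P)"
  using assms unfolding walk_def by (simp add: last_conv_nth)

lemma shortest_walk_induced:
  assumes "walk adj a b P"
  shows "\<exists>Q. induced_walk adj a b Q \<and> set Q \<subseteq> set P"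
proof -
  let ?W = "{Q. walk adj a b Q \<and> set Q \<subseteq> set P}"
  obtain Q where Q: "walk adj a b Q" "set Q \<subseteq> set P"
    and min: "\<And>Q'. Q' \<in> ?W \<Longrightarrow> length Q \<le> length Q'"
    using assms ex_has_least_nat[of "\<lambda>Q. Q \<in> ?W" P length] by auto
  have short: "\<not> walk adj a b Q'" if "set Q' \<subseteq> set Q" "length Q' < length Q" for Q'
    using min[of Q'] that Q(2) by fastforce
  have sub: "set (take i Q @ drop j Q) \<subseteq> set Q" for i j
    by (auto dest: in_set_takeD in_set_dropD)
  have "distinct Q"
  proof (rule ccontr)
    assume "\<not> distinct Q"
    then obtain i j where ij: "i < j" "j < length Q" "Q ! i = Q ! j"
      by (metis distinct_conv_nth linorder_neqE_nat)
    have "if i = 0 then adj a (Q ! j) else adj (Q ! (i - 1)) (Q ! j)"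
    proof (cases i)
      case 0
      then show ?thesis using Q(1) ij unfolding walk_def by (metis hd_conv_nth)
    next
      case (Suc k)
      then have "adj (Q ! k) (Q ! i)" using Q(1) ij(1,2) unfolding walk_def by auto
      then show ?thesis using Suc ij by simp
    qed
    then show False using walk_splice[OF Q(1) ij(1,2)] short[OF sub[of i j]] ij by simp
  qed
  moreover have "\<not> adj a (Q ! j)" if "0 < j" "j < length Q" for j
    using walk_splice[OF Q(1), of 0 j] short[OF sub[of 0 j]] that by auto
  moreover have "\<not> adj (Q ! j) b" if "Suc j < length Q" for j
    using walk_take[OF Q(1) that] short[of "take (Suc j) Q"] that by (auto dest: in_set_takeD)
  moreover have "\<not> adj (Q ! i) (Q ! j)" if "Suc i < j" "j < length Q" for i j
    using walk_splice[OF Q(1), of "Suc i" j] short[OF sub[of "Suc i" j]] that by auto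
  ultimately show ?thesis using Q unfolding induced_walk_def by blast
qed

lemma component_induced_walk:
  assumes C: "C \<in> components (level_rel w t X) X"
    and "p \<in> C" "adj_at w t a p" and "q \<in> C" "adj_at w t q b"
  shows "\<exists>P. induced_walk (adj_at w t) a b P \<and> set P \<subseteq> C"
proof -
  let ?R = "level_rel w t X"
  have Cp: "C = component ?R p" and Cq: "C = component ?R q"
    using component_of_member[OF sym_level_rel C] assms(2,4) by blast+
  then have pq: "(p, q) \<in> ?R\<^sup>*" using component_eq_iff[OF sym_level_rel] by metis
  obtain xs where xs: "xs \<noteq> []" "hd xs = p" "last xs = q" "set xs \<subseteq> {z. (p, z) \<in> ?R\<^sup>*}"
    "\<forall>i. Suc i < length xs \<longrightarrow> (xs ! i, xs ! Suc i) \<in> ?R"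
    using rtrancl_walk[OF pq] by blast
  have "walk (adj_at w t) a b xs"
    using xs assms(3,5) unfolding walk_def level_rel_def by auto
  then obtain Q where "induced_walk (adj_at w t) a b Q" "set Q \<subseteq> set xs"
    by (metis shortest_walk_induced)
  moreover have "set xs \<subseteq> C" using xs(4) Cp unfolding component_def by auto
  ultimately show ?thesis by blast
qed

locale two_walk_cycle =
  fixes adj :: "'a \<Rightarrow> 'a \<Rightarrow> bool" and s x :: 'a and A B :: "'a list"
  assumes adj_sym: "adj p q \<longleftrightarrow> adj q p"
    and walk_A: "induced_walk adj s x A"
    and walk_B: "induced_walk adj x s B"
    and no_cross: "p \<in> set A \<Longrightarrow> q \<in> set B \<Longrightarrow> \<not> adj p q"
begin

definition cyc :: "'a list" where
  "cyc = s # A @ x # B"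

lemma length_cyc: "length cyc = length A + length B + 2"
  by (simp add: cyc_def)

lemma nth_cyc:
  assumes "i < length cyc"
  shows "cyc ! i = (if i = 0 then s else if i \<le> length A then A ! (i - 1)
           else if i = Suc (length A) then x else B ! (i - length A - 2))"
proof (cases i)
  case (Suc k)
  show ?thesis
  proof (cases "k < length A")
    case False
    then have "cyc ! i = (x # B) ! (k - length A)" using Suc by (simp add: cyc_def nth_append)
    moreover have "k - length A = Suc (i - length A - 2)" if "k \<noteq> length A"
      using Suc False that by simp
    ultimately show ?thesis using Suc False by auto
  qed (use Suc in \<open>simp add: cyc_def nth_append\<close>)
qed (simp add: cyc_def)

lemma adj_cyc_Suc:
  assumes "Suc i < length cyc"
  shows "adj (cyc ! i) (cyc ! Suc i)"
proof -
  have A: "A \<noteq> []" "adj s (hd A)" "adj (last A) x" "\<And>k. Suc k < length A \<Longrightarrow> adj (A ! k) (A ! Suc k)"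
    using walk_A unfolding induced_walk_def walk_def by auto
  have B: "B \<noteq> []" "adj x (hd B)" "\<And>k. Suc k < length B \<Longrightarrow> adj (B ! k) (B ! Suc k)"
    using walk_B unfolding induced_walk_def walk_def by auto
  let ?a = "length A"
  consider "i = 0" | "0 < i" "i < ?a" | "i = ?a" | "i = Suc ?a" | "Suc ?a < i" by linarith
  then show ?thesis
  proof cases
    case 1
    then show ?thesis using A(1,2) by (simp add: cyc_def hd_conv_nth nth_append)
  next
    case 2
    then show ?thesis using A(4)[of "i - 1"] nth_cyc[of i] nth_cyc[of "Suc i"] assms by (simp add: length_cyc)
  next
    case 3
    then show ?thesis using A(1,3) nth_cyc[of i] nth_cyc[of "Suc i"] assms by (simp add: length_cyc last_conv_nth)
  next
    case 4
    then show ?thesis using B(1,2) nth_cyc[of i] nth_cyc[of "Suc i"] assms by (simp add: length_cyc hd_conv_nth)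
  next
    case 5
    define m where "m = i - ?a - 2"
    have i: "i = ?a + 2 + m" using 5 unfolding m_def by simp
    then have "cyc ! i = B ! m" "cyc ! Suc i = B ! Suc m" by (simp_all add: cyc_def nth_append)
    moreover have "Suc m < length B" using assms i by (simp add: length_cyc)
    ultimately show ?thesis using B(3) by simp
  qed
qed

lemma adj_cyc_last: "adj (cyc ! (length cyc - 1)) (cyc ! 0)"
proof -
  have "B \<noteq> []" "adj (last B) s" using walk_B unfolding induced_walk_def walk_def by auto
  then show ?thesis by (simp add: cyc_def last_conv_nth nth_append)
qed

lemma walks_nonempty: "A \<noteq> []" "B \<noteq> []"
  using walk_A walk_B unfolding induced_walk_def walk_def by auto

lemma cyc_edge_Suc: "Suc j < length cyc \<Longrightarrow> cyc_edge cyc j = {cyc ! j, cyc ! Suc j}"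
  unfolding cyc_edge_def by simp

lemma cyc_edge_last: "cyc_edge cyc (length cyc - 1) = {cyc ! (length cyc - 1), cyc ! 0}"
  unfolding cyc_edge_def using length_cyc by simp

lemma nonadj_A:
  "0 < k \<Longrightarrow> k < length A \<Longrightarrow> \<not> adj s (A ! k)"
  "Suc k < length A \<Longrightarrow> \<not> adj (A ! k) x"
  "Suc k < l \<Longrightarrow> l < length A \<Longrightarrow> \<not> adj (A ! k) (A ! l)"
  using walk_A unfolding induced_walk_def by blast+

lemma nonadj_B:
  "0 < k \<Longrightarrow> k < length B \<Longrightarrow> \<not> adj x (B ! k)"
  "Suc k < length B \<Longrightarrow> \<not> adj (B ! k) s"
  "Suc k < l \<Longrightarrow> l < length B \<Longrightarrow> \<not> adj (B ! k) (B ! l)"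
  using walk_B unfolding induced_walk_def by blast+

lemma adj_cyc_0:
  assumes j: "0 < j" "j < length cyc" and adj: "adj s (cyc ! j)"
  shows "j = 1 \<or> j = length cyc - 1 \<or> j = Suc (length A)"
proof -
  let ?a = "length A"
  consider "j \<le> ?a" | "j = Suc ?a" | "Suc ?a < j" by linarith
  then show ?thesis
  proof cases
    case 1
    then show ?thesis using nonadj_A(1)[of "j - 1"] adj nth_cyc j by fastforce
  next
    case 3
    then have "adj (B ! (j - ?a - 2)) s" using adj nth_cyc[OF j(2)] adj_sym by auto
    then have "\<not> Suc (j - ?a - 2) < length B" using nonadj_B(2) by blast
    then show ?thesis using 3 j(2) length_cyc by auto
  qed simp
qed

lemma adj_cyc_inner:
  assumes ij: "0 < i" "i < j" "j < length cyc" and adj: "adj (cyc ! i) (cyc ! j)"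
  shows "j = Suc i"
proof -
  let ?a = "length A"
  have cj: "cyc ! j = (if j \<le> ?a then A ! (j - 1) else if j = Suc ?a then x else B ! (j - ?a - 2))"
    using nth_cyc ij by simp
  consider "i \<le> ?a" "j \<le> ?a" | "i \<le> ?a" "j = Suc ?a" | "i \<le> ?a" "Suc ?a < j"
    | "i = Suc ?a" | "Suc ?a < i" by linarith
  then show ?thesis
  proof cases
    case 1
    then show ?thesis using nonadj_A(3)[of "i - 1" "j - 1"] adj nth_cyc cj ij by fastforce
  next
    case 2
    then show ?thesis using nonadj_A(2)[of "i - 1"] adj nth_cyc cj ij by fastforce
  next
    case 3
    then have "A ! (i - 1) \<in> set A" "B ! (j - ?a - 2) \<in> set B"
      using ij length_cyc by auto
    then show ?thesis using no_cross adj nth_cyc cj ij 3 by auto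
  next
    case 4
    then show ?thesis using nonadj_B(1)[of "j - ?a - 2"] adj nth_cyc cj ij length_cyc by fastforce
  next
    case 5
    then show ?thesis using nonadj_B(3)[of "i - ?a - 2" "j - ?a - 2"] adj nth_cyc cj ij length_cyc
      by fastforce
  qed
qed

lemma adj_cyc_cases:
  assumes "i < j" and "j < length cyc" and "adj (cyc ! i) (cyc ! j)"
  shows "j = Suc i \<or> (i = 0 \<and> j = length cyc - 1) \<or> (i = 0 \<and> j = Suc (length A))"
proof (cases "i = 0")
  case True
  then show ?thesis using adj_cyc_0[of j] assms by (simp add: cyc_def)
qed (use adj_cyc_inner assms in blast)

end

lemma in_Gt_iff: "p \<in> V \<Longrightarrow> q \<in> V \<Longrightarrow> in_Gt V w t {p, q} \<longleftrightarrow> adj_at w t p q"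
  unfolding in_Gt_def adj_at_def by (auto simp: cedges_iff)

lemma adj_at_if_in_Gt: "in_Gt V w t {p, q} \<Longrightarrow> adj_at w t p q"
  unfolding in_Gt_def adj_at_def by (auto simp: cedges_iff singleton_notin_cedges)

lemma is_cycle_Gt_two_walks:
  assumes "two_walk_cycle (adj_at w t) s x A B"
    and "distinct (s # A @ x # B)" and "set (s # A @ x # B) \<subseteq> V"
  shows "is_cycle_Gt V w t (s # A @ x # B)"
proof -
  interpret two_walk_cycle "adj_at w t" s x A B by (fact assms(1))
  let ?n = "length cyc"
  have inV: "cyc ! i \<in> V" if "i < ?n" for i
    using assms(3) that unfolding cyc_def by (meson nth_mem subsetD)
  have "in_Gt V w t (cyc_edge cyc j)" if j: "j < ?n" for j
  proof -
    consider "Suc j < ?n" | "j = ?n - 1" using j by linarith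
    then show ?thesis
    proof cases
      case 1
      then show ?thesis
        using cyc_edge_Suc adj_cyc_Suc inV in_Gt_iff[of "cyc ! j" V "cyc ! Suc j"] by simp
    next
      case 2
      then show ?thesis
        using cyc_edge_last adj_cyc_last inV in_Gt_iff[of "cyc ! (?n - 1)" V "cyc ! 0"] length_cyc
        by simp
    qed
  qed
  then have "is_cycle_Gt V w t cyc"
    unfolding is_cycle_Gt_def using assms(2) walks_nonempty length_cyc
    by (simp add: cyc_def Suc_leI)
  then show ?thesis unfolding cyc_def .
qed

lemma covers_two_walks:
  assumes "two_walk_cycle (adj_at w t) s x A B"
    and "adj_at w t s x \<Longrightarrow> \<exists>y. A = [y] \<and> w {s, y} \<le> w {s, x} \<and> w {y, x} \<le> w {s, x}"
    and "is_chord_Gt V w t (s # A @ x # B) i j"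
  shows "covers w (s # A @ x # B) i j"
proof -
  interpret two_walk_cycle "adj_at w t" s x A B by (fact assms(1))
  let ?n = "length cyc"
  from assms(3) have ij: "i < j" "j < ?n" and chord: "in_Gt V w t {cyc ! i, cyc ! j}"
    and not_edge: "{cyc ! i, cyc ! j} \<notin> cyc_edge cyc ` {..<?n}"
    unfolding is_chord_Gt_def cyc_def by auto
  have adj: "adj_at w t (cyc ! i) (cyc ! j)" using adj_at_if_in_Gt[OF chord] .
  have "j \<noteq> Suc i" using cyc_edge_Suc[of i] not_edge ij by auto
  moreover have "\<not> (i = 0 \<and> j = ?n - 1)"
    using cyc_edge_last not_edge length_cyc by (auto simp: insert_commute)
  ultimately have ij': "i = 0" "j = Suc (length A)" using adj_cyc_cases[OF ij adj] by auto
  then have "adj_at w t s x" using adj ij by (simp add: cyc_def nth_append)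
  then obtain y where y: "A = [y]" "w {s, y} \<le> w {s, x}" "w {y, x} \<le> w {s, x}"
    using assms(2) by blast
  then have "cyc ! 0 = s" "cyc ! 1 = y" "cyc ! 2 = x" "2 < ?n" "i = 0" "j = 2"
    unfolding cyc_def using ij' walks_nonempty by simp_all
  then have "cyc_edge cyc 0 = {s, y}" "cyc_edge cyc 1 = {y, x}"
    using cyc_edge_Suc[of 0] cyc_edge_Suc[of 1] by (simp_all add: numeral_2_eq_2)
  then have "covers w cyc i j"
    unfolding covers_def using y \<open>cyc ! 0 = s\<close> \<open>cyc ! 2 = x\<close> \<open>i = 0\<close> \<open>j = 2\<close>
    by (auto simp: less_2_cases_iff insert_commute)
  then show ?thesis unfolding cyc_def .
qed

lemma violated_cycle_of_two_walks:
  assumes cyc: "two_walk_cycle (adj_at w t) s x A B"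
    and dist: "distinct (s # A @ x # B)" and V: "set (s # A @ x # B) \<subseteq> V"
    and chord: "adj_at w t s x \<Longrightarrow> \<exists>y. A = [y] \<and> w {s, y} \<le> w {s, x} \<and> w {y, x} \<le> w {s, x}"
    and root: "\<exists>z \<in> set A \<union> set B. z \<noteq> r \<and> \<not> adj_at w t r z"
  shows "violated_cycle_Gt V r w t (s # A @ x # B)"
proof -
  interpret two_walk_cycle "adj_at w t" s x A B by (fact cyc)
  have "well_covered_Gt V w t (s # A @ x # B)"
    unfolding well_covered_Gt_def
    using is_cycle_Gt_two_walks[OF cyc dist V] covers_two_walks[OF cyc chord] by blast
  moreover have "\<exists>y\<in>set (s # A @ x # B). \<exists>z\<in>set (s # A @ x # B). y \<noteq> z \<and> \<not> in_Gt V w t {y, z}"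
  proof -
    have "hd A \<in> set A" "hd B \<in> set B" "\<not> adj_at w t (hd A) (hd B)"
      using walks_nonempty no_cross by auto
    moreover have "hd A \<noteq> hd B" using calculation(1,2) dist by auto
    ultimately show ?thesis using adj_at_if_in_Gt[of V w t "hd A" "hd B"] by auto
  qed
  moreover have "\<exists>z\<in>set (s # A @ x # B). z \<noteq> r \<and> \<not> in_Gt V w t {r, z}"
    using root adj_at_if_in_Gt[of V w t r] by auto
  ultimately show ?thesis
    unfolding violated_cycle_Gt_def by blast
qed

lemma distinct_components_nonadj:
  assumes "C1 \<in> components (level_rel w t T) T" and "C2 \<in> components (level_rel w t T) T"
    and "C1 \<noteq> C2" and "p \<in> C1" and "q \<in> C2"
  shows "\<not> adj_at w t p q" and "p \<noteq> q"
proof -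
  let ?R = "level_rel w t T"
  have C: "C1 = component ?R p" "C2 = component ?R q"
    using component_of_member[OF sym_level_rel assms(1,4)] component_of_member[OF sym_level_rel assms(2,5)] .
  have "p \<in> T" "q \<in> T"
    using components_level_subset[OF assms(1)] components_level_subset[OF assms(2)] assms(4,5) by auto
  moreover have "(p, q) \<notin> ?R\<^sup>*"
    using C assms(3) component_eq_iff[OF sym_level_rel, of w t T p q] by simp
  ultimately show "\<not> adj_at w t p q"
    unfolding level_rel_def by blast
  show "p \<noteq> q" using C assms(3) by blast
qed

lemma violated_cycle_of_component_walks:
  assumes "T \<subseteq> V" and "r \<in> T" and "s \<in> V" "x \<in> V" "s \<notin> T" "x \<notin> T" "s \<noteq> x"
    and D1: "D1 \<in> components (level_rel w t T) T" and D2: "D2 \<in> components (level_rel w t T) T"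
    and "D1 \<noteq> D2"
    and A: "induced_walk (adj_at w t) s x A" "set A \<subseteq> D1"
    and B: "induced_walk (adj_at w t) x s B" "set B \<subseteq> D2"
    and chord: "adj_at w t s x \<Longrightarrow> \<exists>y. A = [y] \<and> w {s, y} \<le> w {s, x} \<and> w {y, x} \<le> w {s, x}"
  shows "violated_cycle_Gt V r w t (s # A @ x # B)"
proof (rule violated_cycle_of_two_walks)
  have AB: "A \<noteq> []" "B \<noteq> []"
    using A(1) B(1) unfolding induced_walk_def walk_def by auto
  have nonadj: "\<not> adj_at w t p q" "p \<noteq> q" if "p \<in> D1" "q \<in> D2" for p q
    using distinct_components_nonadj[OF D1 D2 \<open>D1 \<noteq> D2\<close> that] by blast+
  have sub: "D1 \<subseteq> T" "D2 \<subseteq> T"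
    using components_level_subset[OF D1] components_level_subset[OF D2] .
  show "two_walk_cycle (adj_at w t) s x A B"
  proof
    show "adj_at w t p q \<longleftrightarrow> adj_at w t q p" for p q by (rule adj_at_sym)
    show "\<not> adj_at w t p q" if "p \<in> set A" "q \<in> set B" for p q
      using nonadj(1) A(2) B(2) that by blast
  qed (fact A(1) B(1))+
  show "distinct (s # A @ x # B)"
    using A B nonadj(2) sub assms(5-7) unfolding induced_walk_def by auto
  show "set (s # A @ x # B) \<subseteq> V"
    using A(2) B(2) sub assms(1,3,4) by auto
  show "\<exists>z\<in>set A \<union> set B. z \<noteq> r \<and> \<not> adj_at w t r z"
  proof -
    let ?Dr = "component (level_rel w t T) r"
    have Dr: "?Dr \<in> components (level_rel w t T) T" "r \<in> ?Dr"
      using assms(2) component_refl unfolding components_def by auto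
    consider "?Dr \<noteq> D1" | "?Dr \<noteq> D2" using \<open>D1 \<noteq> D2\<close> by blast
    then show ?thesis
    proof cases
      case 1
      have "hd A \<in> set A" using AB(1) by simp
      moreover from this have "\<not> adj_at w t r (hd A)" "r \<noteq> hd A"
        using distinct_components_nonadj[OF Dr(1) D1 1 Dr(2)] A(2) by auto
      ultimately show ?thesis by auto
    next
      case 2
      have "hd B \<in> set B" using AB(2) by simp
      moreover from this have "\<not> adj_at w t r (hd B)" "r \<noteq> hd B"
        using distinct_components_nonadj[OF Dr(1) D2 2 Dr(2)] B(2) by auto
      ultimately show ?thesis by auto
    qed
  qed
qed (fact chord)

lemma violated_cycle_of_shared_components:
  assumes "T \<subseteq> V" and "r \<in> T" and "s \<in> V" "x \<in> V" "s \<notin> T" "x \<notin> T" "s \<noteq> x"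
    and C1: "C1 \<in> adj_comps w t T s \<inter> adj_comps w t T x"
    and C2: "C2 \<in> adj_comps w t T s \<inter> adj_comps w t T x" and "C1 \<noteq> C2"
    and light_nbr: "adj_at w t s x \<Longrightarrow>
      \<exists>y\<in>T. adj_at w t s y \<and> adj_at w t y x \<and> w {s, y} \<le> w {s, x} \<and> w {y, x} \<le> w {s, x}"
  shows "\<exists>cs. violated_cycle_Gt V r w t cs"
proof -
  let ?comps = "components (level_rel w t T) T"
  have walk: "\<exists>P. induced_walk (adj_at w t) a b P \<and> set P \<subseteq> C"
    if C: "C \<in> ?comps" and a: "\<exists>p\<in>C. adj_at w t a p" and b: "\<exists>q\<in>C. adj_at w t b q" for C a b
  proof -
    obtain p q where "p \<in> C" "adj_at w t a p" "q \<in> C" "adj_at w t b q"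
      using a b by blast
    then show ?thesis using component_induced_walk[OF C] adj_at_sym[of w t b q] by simp
  qed
  have C12: "C \<in> ?comps" "\<exists>p\<in>C. adj_at w t s p" "\<exists>p\<in>C. adj_at w t x p"
    if "C \<in> {C1, C2}" for C
    using C1 C2 that unfolding adj_comps_def by auto
  note C1' = C12[of C1, simplified] and C2' = C12[of C2, simplified]
  show ?thesis
  proof (cases "adj_at w t s x")
    case False
    obtain A B where "induced_walk (adj_at w t) s x A" "set A \<subseteq> C1"
      "induced_walk (adj_at w t) x s B" "set B \<subseteq> C2"
      using walk[OF C1'(1,2,3)] walk[OF C2'(1,3,2)] by auto
    then show ?thesis
      using violated_cycle_of_component_walks[OF assms(1-7) C1'(1) C2'(1) \<open>C1 \<noteq> C2\<close>] False
      by blast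
  next
    case True
    (* Route the walk from s to x through y, so that the chord sx is covered by s, y, x. *)
    then obtain y where y: "y \<in> T" "adj_at w t s y" "adj_at w t y x" "w {s, y} \<le> w {s, x}" "w {y, x} \<le> w {s, x}"
      using light_nbr by blast
    let ?Dy = "component (level_rel w t T) y"
    have Dy: "?Dy \<in> ?comps" "set [y] \<subseteq> ?Dy"
      using y(1) component_refl unfolding components_def by auto
    obtain C where C: "C \<in> {C1, C2}" "C \<noteq> ?Dy"
      using \<open>C1 \<noteq> C2\<close> by blast
    then obtain B where B: "induced_walk (adj_at w t) x s B" "set B \<subseteq> C"
      using walk[OF C12(1,3,2)[OF C(1)]] by auto
    have "induced_walk (adj_at w t) s x [y]"
      using y unfolding induced_walk_def walk_def by auto
    then have "violated_cycle_Gt V r w t (s # [y] @ x # B)"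
      using violated_cycle_of_component_walks[OF assms(1-7) Dy(1) C12(1)[OF C(1)] C(2)[symmetric] _ Dy(2) B] y
      by blast
    then show ?thesis by blast
  qed
qed


section \<open>Monotonicity of f_uv\<close>

definition no_violated_cycle :: "'a set \<Rightarrow> 'a \<Rightarrow> ('a set \<Rightarrow> real) \<Rightarrow> bool" where
  "no_violated_cycle V r w \<longleftrightarrow> (\<forall>t \<in> w ` cedges V. t < Max (w ` cedges V) \<longrightarrow>
     \<not> (\<exists>cs. violated_cycle_Gt V r w t cs))"

lemma f_uv_commute: "f_uv w u v X = f_uv w v u X"
  unfolding f_uv_def by (simp add: insert_commute)

lemma f_uv_insert_diff:
  "f_uv w u v (insert s T) - f_uv w u v T = f_uv w s u (insert v T) - f_uv w s u T"
  unfolding f_uv_def by (simp add: insert_commute)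

lemma f_uv_nonpos_if_light_common_nbr:
  assumes "finite W" and "finite X" and "w ` cedges (insert s (insert x X)) \<subseteq> W"
    and "s \<notin> X" and "x \<notin> X" and "s \<noteq> x"
    and "y \<in> X" and "w {s, y} \<le> w {s, x}" and "w {x, y} \<le> w {s, x}"
  shows "f_uv w s x X \<le> 0"
proof -
  have level: "f_at w t s x X \<le> 0" for t
  proof (cases "adj_at w t s x")
    case True
    then have "adj_at w t s y" "adj_at w t x y"
      using assms(4-9) unfolding adj_at_def by auto
    then show ?thesis using f_at_nonpos_if_common_nbr[OF assms(2,4-7)] by blast
  qed (use f_at_nonpos_if_nonadj[OF assms(2,4-6)] in blast)
  have gap: "next_weight W t - t \<ge> 0" if "t \<in> W" "t < Max W" for t
    using next_weight_gt[OF assms(1) that] by simp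
  have "X \<noteq> {}" using assms(7) by blast
  then show ?thesis
    unfolding f_uv_eq_level_sum[OF assms(1,2) \<open>X \<noteq> {}\<close> assms(3-6)]
    using level gap by (auto intro!: sum_nonpos mult_nonneg_nonpos)
qed

lemma le_if_insert_steps:
  fixes F :: "'a set \<Rightarrow> real"
  assumes "finite M" and "T \<subseteq> M"
    and "\<And>T' z. T \<subseteq> T' \<Longrightarrow> T' \<subseteq> M \<Longrightarrow> z \<in> M - T' \<Longrightarrow> F (insert z T') \<le> F T'"
  shows "F M \<le> F T"
  using assms(2,3)
proof (induction "card (M - T)" arbitrary: T rule: less_induct)
  case less
  show ?case
  proof (cases "T = M")
    case False
    then obtain z where z: "z \<in> M - T" using less.prems(1) by blast
    then have "card (M - insert z T) < card (M - T)"
      using assms(1) by (metis Diff_insert card_Diff1_less finite_Diff)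
    then have "F M \<le> F (insert z T)"
      using less.hyps[of "insert z T"] less.prems z by blast
    also have "F (insert z T) \<le> F T"
      using less.prems z by blast
    finally show ?thesis .
  qed simp
qed

lemma card_adj_comps_inter_le_1:
  assumes "finite T" and "T \<subseteq> V" and "r \<in> T" and "s \<in> V - T" and "x \<in> V - T" and "s \<noteq> x"
    and "y \<in> T" and "w {y, s} \<le> w {s, x}" and "w {y, x} \<le> w {s, x}"
    and "\<nexists>cs. violated_cycle_Gt V r w t cs"
  shows "card (adj_comps w t T s \<inter> adj_comps w t T x) \<le> 1"
proof (rule ccontr)
  assume "\<not> card (adj_comps w t T s \<inter> adj_comps w t T x) \<le> 1"
  moreover have fin: "finite (adj_comps w t T s \<inter> adj_comps w t T x)"
    by (simp add: finite_adj_comps[OF assms(1)])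
  ultimately obtain C1 C2 where C: "C1 \<in> adj_comps w t T s \<inter> adj_comps w t T x"
    "C2 \<in> adj_comps w t T s \<inter> adj_comps w t T x" "C1 \<noteq> C2"
    using card_le_Suc0_iff_eq[OF fin] by auto
  have "\<exists>y\<in>T. adj_at w t s y \<and> adj_at w t y x \<and> w {s, y} \<le> w {s, x} \<and> w {y, x} \<le> w {s, x}"
    if "adj_at w t s x"
  proof -
    have "y \<noteq> s" "y \<noteq> x" using assms(4,5,7) by auto
    then show ?thesis
      using that assms(7-9) unfolding adj_at_def by (intro bexI[of _ y]) (auto simp: insert_commute)
  qed
  then show False
    using violated_cycle_of_shared_components[OF assms(2,3) _ _ _ _ assms(6) C] assms(4,5,10) by blast
qed

lemma f_uv_insert_le_by_levels:
  assumes V: "finite V" and no_viol: "no_violated_cycle V r w"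
    and T: "T \<subseteq> V" "r \<in> T" and s: "s \<in> V - T" and uv: "u \<in> V - T" "v \<in> V - T"
    and ne: "s \<noteq> u" "s \<noteq> v" "u \<noteq> v" and x: "x \<in> {u, v}"
    and y: "y \<in> T" "w {y, s} \<le> w {s, x}" "w {y, x} \<le> w {s, x}"
  shows "f_uv w u v (insert s T) \<le> f_uv w u v T"
proof -
  define W where "W = w ` cedges V"
  have finW: "finite W" unfolding W_def using finite_cedges[OF V] by simp
  have finT: "finite T" using finite_subset[OF T(1) V] .
  have "f_at w t u v (insert s T) \<le> f_at w t u v T" if t: "t \<in> W" "t < Max W" for t
  proof (rule f_at_insert_le[OF finT])
    have "x \<in> V - T" "s \<noteq> x" using x uv ne by auto
    moreover have "\<nexists>cs. violated_cycle_Gt V r w t cs"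
      using no_viol t unfolding no_violated_cycle_def W_def by blast
    ultimately have "card (adj_comps w t T s \<inter> adj_comps w t T x) \<le> 1"
      by (rule card_adj_comps_inter_le_1[OF finT T s _ _ y])
    moreover have "card (common_comps w t T u v \<inter> adj_comps w t T s) \<le> card (adj_comps w t T s \<inter> adj_comps w t T x)"
      using x by (intro card_mono) (auto simp: finite_adj_comps[OF finT] common_comps_def)
    ultimately show "card (common_comps w t T u v \<inter> adj_comps w t T s) \<le> 1"
      by linarith
  qed (use s uv ne in auto)
  moreover have "next_weight W t - t \<ge> 0" if "t \<in> W" "t < Max W" for t
    using next_weight_gt[OF finW that] by simp
  moreover have "f_uv w u v X = (\<Sum>t\<in>{t\<in>W. t < Max W}. (next_weight W t - t) * real_of_int (f_at w t u v X))"
    if "X \<subseteq> V" "r \<in> X" "u \<notin> X" "v \<notin> X" for X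
  proof (rule f_uv_eq_level_sum[OF finW])
    show "w ` cedges (insert u (insert v X)) \<subseteq> W"
      unfolding W_def using uv that(1) by (intro image_mono cedges_mono) auto
  qed (use that finite_subset[OF _ V] ne(3) in auto)
  ultimately show ?thesis
    using T s uv ne by (auto intro!: sum_mono mult_left_mono)
qed

lemma f_uv_insert_le_by_heavier_edge:
  assumes V: "finite V" "s \<in> V" "x \<in> V" "x' \<in> V" and ne: "s \<noteq> x" "s \<noteq> x'" "x \<noteq> x'"
    and T: "T \<subseteq> Nhat V w s x" "x' \<notin> T" and uv: "{x, x'} = {u, v}"
    and light: "w {s, x'} \<le> w {s, x}" "w {x, x'} \<le> w {s, x}"
    and nonneg: "f_uv w s x (Nhat V w s x) \<ge> 0"
    and steps: "\<And>T' z. T \<subseteq> T' \<Longrightarrow> T' \<subseteq> Nhat V w s x \<Longrightarrow> z \<in> Nhat V w s x - T' \<Longrightarrow>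
      f_uv w s x (insert z T') \<le> f_uv w s x T'"
  shows "f_uv w u v (insert s T) \<le> f_uv w u v T"
proof -
  have "Nhat V w s x \<subseteq> V - {s, x}" unfolding Nhat_def by auto
  then have TV: "T \<subseteq> V" "s \<notin> T" "x \<notin> T" and fin: "finite (Nhat V w s x)"
    using T(1) finite_subset[OF _ V(1)] by auto
  have "f_uv w s x (Nhat V w s x) \<le> f_uv w s x T"
    using le_if_insert_steps[OF fin T(1) steps] by blast
  moreover have "f_uv w s x (insert x' T) \<le> 0"
  proof (rule f_uv_nonpos_if_light_common_nbr)
    show "finite (w ` cedges V)" using finite_cedges[OF V(1)] by simp
    show "w ` cedges (insert s (insert x (insert x' T))) \<subseteq> w ` cedges V"
      using V TV by (intro image_mono cedges_mono) auto
  qed (use finite_subset[OF TV(1) V(1)] TV T(2) ne light in \<open>auto simp: insert_commute\<close>)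
  moreover have "f_uv w u v (insert s T) - f_uv w u v T = f_uv w s x (insert x' T) - f_uv w s x T"
    using uv f_uv_insert_diff f_uv_commute by (metis doubleton_eq_iff)
  ultimately show ?thesis using nonneg by linarith
qed

lemma Nhat_heavier_endpoint:
  assumes "s \<in> Nhat V w u v"
  obtains x x' where "{x, x'} = {u, v}" and "w {u, v} < w {s, x}" and "w {s, x'} \<le> w {s, x}"
proof -
  have max: "max (w {s, u}) (w {s, v}) > w {u, v}" using assms unfolding Nhat_def by auto
  show ?thesis
  proof (cases "w {s, v} \<le> w {s, u}")
    case True
    then show ?thesis using that[of u v] max by simp
  next
    case False
    then show ?thesis using that[of v u] max insert_commute[of v u "{}"] by simp
  qed
qed

lemma card_heavier_edges_less:
  fixes w :: "'a set \<Rightarrow> real"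
  assumes "finite V" and "e \<in> cedges V" and "w e' < w e"
  shows "card {f \<in> cedges V. w e < w f} < card {f \<in> cedges V. w e' < w f}"
proof (rule psubset_card_mono)
  show "finite {f \<in> cedges V. w e' < w f}" using finite_cedges[OF assms(1)] by simp
  have "{f \<in> cedges V. w e < w f} \<subseteq> {f \<in> cedges V. w e' < w f}" using assms(3) by auto
  moreover have "e \<in> {f \<in> cedges V. w e' < w f} - {f \<in> cedges V. w e < w f}" using assms(2,3) by simp
  ultimately show "{f \<in> cedges V. w e < w f} \<subset> {f \<in> cedges V. w e' < w f}" by blast
qed

lemma f_uv_insert_le:
  fixes N :: "'a set" and r :: 'a and w :: "'a set \<Rightarrow> real"
  assumes finN: "finite N" and no_viol: "no_violated_cycle (insert r N) r w"
    and nonneg: "\<forall>x y. candidate_edge N r w x y \<longrightarrow> f_uv w x y (Nhat (insert r N) w x y) \<ge> 0"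
  shows "candidate_edge N r w u v \<Longrightarrow> r \<in> T \<Longrightarrow> T \<subseteq> insert r N \<Longrightarrow> u \<notin> T \<Longrightarrow> v \<notin> T
     \<Longrightarrow> s \<in> Nhat (insert r N) w u v - T \<Longrightarrow> f_uv w u v (insert s T) \<le> f_uv w u v T"
proof (induction "card {e \<in> cedges (insert r N). w {u, v} < w e}" arbitrary: u v T s rule: less_induct)
  case less
  define V where "V = insert r N"
  have finV: "finite V" using finN unfolding V_def by simp
  have cand: "u \<in> N" "v \<in> N" "u \<noteq> v"
    using less.prems(1) unfolding candidate_edge_def by auto
  have T: "r \<in> T" "T \<subseteq> V" "u \<notin> T" "v \<notin> T" and s: "s \<in> V" "s \<notin> T" "s \<noteq> u" "s \<noteq> v"
    using less.prems unfolding V_def Nhat_def by auto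
  obtain x x' where xx': "{x, x'} = {u, v}" and heavy: "w {u, v} < w {s, x}" and light: "w {s, x'} \<le> w {s, x}"
    using Nhat_heavier_endpoint[OF less.prems(6)[THEN DiffD1]] by blast
  have x: "x \<in> N" "x \<in> V" "x \<notin> T" "s \<noteq> x" "x' \<in> V" "x' \<notin> T" "s \<noteq> x'" "x \<noteq> x'"
    using xx' cand T s unfolding V_def by (auto simp: doubleton_eq_iff)
  show ?case
  proof (cases "T \<subseteq> Nhat V w s x")
    case True
    have cand_sx: "candidate_edge N r w s x"
      unfolding candidate_edge_def using True T(1) s x V_def by auto
    have fewer: "card {e \<in> cedges V. w {s, x} < w e} < card {e \<in> cedges V. w {u, v} < w e}"
      using card_heavier_edges_less[OF finV _ heavy] s x by (simp add: cedges_iff)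
    have "f_uv w s x (insert z T') \<le> f_uv w s x T'"
      if "T \<subseteq> T'" "T' \<subseteq> Nhat V w s x" "z \<in> Nhat V w s x - T'" for T' z
    proof -
      have "T' \<subseteq> insert r N" "s \<notin> T'" "x \<notin> T'"
        using that(2) unfolding Nhat_def V_def by auto
      then show ?thesis
        using less.hyps[OF fewer[unfolded V_def] cand_sx, of T' z] that(1,3) T(1)
        unfolding V_def by auto
    qed
    moreover have "w {x, x'} \<le> w {s, x}" using xx' heavy by (auto simp: doubleton_eq_iff insert_commute)
    ultimately show ?thesis
      using f_uv_insert_le_by_heavier_edge[OF finV s(1) x(2,5) x(4,7,8) True x(6) xx' light]
        nonneg cand_sx unfolding V_def by blast
  next
    case False
    then obtain y where y: "y \<in> T" "y \<notin> Nhat V w s x" by blast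
    then have "w {y, s} \<le> w {s, x}" "w {y, x} \<le> w {s, x}"
      using T(2) s(2) x(3) unfolding Nhat_def by (auto simp: insert_commute)
    moreover have "s \<in> V - T" "u \<in> V - T" "v \<in> V - T" "x \<in> {u, v}"
      using s T cand xx' unfolding V_def by auto
    ultimately show ?thesis
      using f_uv_insert_le_by_levels[OF finV no_viol[folded V_def] T(2,1) _ _ _ s(3,4) cand(3) _ y(1)]
      by blast
  qed
qed

theorem lemma6:
  fixes N :: "'a set" and r :: 'a and w :: "'a set \<Rightarrow> real"
  assumes "finite N" and "r \<notin> N"
    and no_viol: "\<forall>t \<in> w ` cedges (insert r N). t < Max (w ` cedges (insert r N)) \<longrightarrow>
                   \<not> (\<exists>cs. violated_cycle_Gt (insert r N) r w t cs)"
    and nonneg: "\<forall>x y. candidate_edge N r w x y \<longrightarrow> f_uv w x y (Nhat (insert r N) w x y) \<ge> 0"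
    and cand: "candidate_edge N r w u v"
    and "r \<in> S" and "u \<notin> S" and "v \<notin> S"
    and "S \<subseteq> Nhat (insert r N) w u v"
    and "s \<in> S - {r}"
  shows "f_uv w u v S \<le> f_uv w u v (S - {s})"
proof -
  have "no_violated_cycle (insert r N) r w"
    using no_viol unfolding no_violated_cycle_def .
  moreover have "r \<in> S - {s}" "S - {s} \<subseteq> insert r N" "u \<notin> S - {s}" "v \<notin> S - {s}"
    "s \<in> Nhat (insert r N) w u v - (S - {s})"
    using assms(6-10) unfolding Nhat_def by auto
  ultimately have "f_uv w u v (insert s (S - {s})) \<le> f_uv w u v (S - {s})"
    by (rule f_uv_insert_le[OF assms(1) _ nonneg cand])
  moreover have "insert s (S - {s}) = S" using assms(10) by auto
  ultimately show ?thesis by simp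
qed

end
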